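(* Let $N\ge0$ be an integer and let $\phi\in L^2(\mathbb{Q}_p)$ be a scaling function of a multiresolution analysis in $L^2(\mathbb{Q}_p)$ with $\operatorname{supp}\phi\subset B_N(0)$. Then $\phi$ is refinable and there exist complex numbers $h_k$, $k=0,\dots,p^{N+1}-1$, such that $$\phi(x)=\sum_{k=0}^{p^{N+1}-1}h_k\,\phi\Big(\frac{x}{p}-\frac{k}{p^{N+1}}\Big)\qquad\text{for all }x\in\mathbb{Q}_p$$ (as elements of $L^2(\mathbb{Q}_p)$).
   Context: $p$ is a prime, $\mathbb{Q}_p$ the field of $p$-adic numbers with norm $|\cdot|_p$ and Haar measure $dx$. Every nonzero $x\in\mathbb{Q}_p$ has canonical form $x=p^{\gamma}\sum_{j\ge0}x_jp^j$ with $x_j\in\{0,\dots,p-1\}$, $x_0\ne0$; its fractional part is $\{x\}_p=p^{\gamma}\sum_{j=0}^{-\gamma-1}x_jp^j$, and $\{0\}_p=0$. $I_p=\{a\in\mathbb{Q}_p:\{a\}_p=a\}$, $B_\gamma(a)=\{x:|x-a|_p\le p^\gamma\}$. A multiresolution analysis (MRA) in $L^2(\mathbb{Q}_p)$ is a collection of closed subspaces $V_j\subset L^2(\mathbb{Q}_p)$, $j\in\mathbb{Z}$, such that: (a) $V_j\subset V_{j+1}$ for all $j$; (b) $\bigcup_jV_j$ is dense in $L^2(\mathbb{Q}_p)$; (c) $\bigcap_jV_j=\{0\}$; (d) $f(\cdot)\in V_j\iff f(p^{-1}\cdot)\in V_{j+1}$ for all $j$; (e) there is $\phi\in V_0$ with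 $V_0=\overline{\operatorname{span}\{\phi(x-a):a\in I_p\}}$. Such a $\phi$ is called a scaling function of the MRA. A function $\phi\in L^2(\mathbb{Q}_p)$ is refinable if $\phi(x)=\sum_{a\in I_p}\alpha_a\phi(p^{-1}x-a)$ for some complex $\alpha_a$ (convergence in $L^2$). *)

theory Defs
  imports "HOL-Analysis.Analysis"
begin

text \<open>An element x of Q_p is represented by the sequence of its residues
  x mod p^n Z_p, n = 0,1,2,..., each given by its canonical representative,
  a rational number r_n in Z[1/p] with 0 <= r_n < p^n, compatible in the sense
  r_(n+1) = r_n (mod p^n Z).  (Q_p is the inverse limit of Z[1/p]/p^n Z.)
  r_0 is exactly the fractional part of x.\<close>

definition padic :: "nat \<Rightarrow> (nat \<Rightarrow> rat) set" where
  "padic p = {r. \<forall>n. 0 \<le> r n \<and> r n < of_nat (p ^ n)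
      \<and> (\<exists>k::nat. of_nat (p ^ k) * r n \<in> \<int>)
      \<and> (\<exists>k::int. r (Suc n) - r n = of_nat (p ^ n) * of_int k)}"

definition rmod :: "rat \<Rightarrow> rat \<Rightarrow> rat" where
  "rmod q m = q - m * of_int \<lfloor>q / m\<rfloor>"

text \<open>embedding of Z[1/p] (as a subset of Q) into Q_p\<close>
definition padic_of_rat :: "nat \<Rightarrow> rat \<Rightarrow> (nat \<Rightarrow> rat)" where
  "padic_of_rat p q = (\<lambda>n. rmod q (of_nat (p ^ n)))"

definition pzero :: "nat \<Rightarrow> rat" where
  "pzero = (\<lambda>n. 0)"

definition padd :: "nat \<Rightarrow> (nat \<Rightarrow> rat) \<Rightarrow> (nat \<Rightarrow> rat) \<Rightarrow> (nat \<Rightarrow> rat)" where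
  "padd p x y = (\<lambda>n. rmod (x n + y n) (of_nat (p ^ n)))"

definition psub :: "nat \<Rightarrow> (nat \<Rightarrow> rat) \<Rightarrow> (nat \<Rightarrow> rat) \<Rightarrow> (nat \<Rightarrow> rat)" where
  "psub p x y = (\<lambda>n. rmod (x n - y n) (of_nat (p ^ n)))"

text \<open>x / p, i.e. p^(-1) x\<close>
definition pdivp :: "nat \<Rightarrow> (nat \<Rightarrow> rat) \<Rightarrow> (nat \<Rightarrow> rat)" where
  "pdivp p x = (\<lambda>n. x (Suc n) / of_nat p)"

definition pfrac :: "(nat \<Rightarrow> rat) \<Rightarrow> rat" where
  "pfrac x = x 0"

text \<open>x \<in> p^n Z_p, for an integer n\<close>
definition in_pZ :: "nat \<Rightarrow> int \<Rightarrow> (nat \<Rightarrow> rat) \<Rightarrow> bool" where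
  "in_pZ p n x = (if 0 \<le> n then x (nat n) = 0
                  else of_nat (p ^ nat (- n)) * x 0 \<in> \<int>)"

text \<open>p-adic norm: |x|_p <= p^m iff x \<in> p^(-m) Z_p; |x|_p is the infimum of these p^m
  (this gives 0 for x = 0 and p^(-gamma) for x = p^gamma(x_0 + x_1 p + ...), x_0 \<noteq> 0).\<close>
definition pnorm :: "nat \<Rightarrow> (nat \<Rightarrow> rat) \<Rightarrow> real" where
  "pnorm p x = Inf {real p powr real_of_int m | m::int. in_pZ p (- m) x}"

definition pball :: "nat \<Rightarrow> int \<Rightarrow> (nat \<Rightarrow> rat) \<Rightarrow> (nat \<Rightarrow> rat) set" where
  "pball p \<gamma> a = {x \<in> padic p. pnorm p (psub p x a) \<le> real p powr real_of_int \<gamma>}"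

definition Ip :: "nat \<Rightarrow> (nat \<Rightarrow> rat) set" where
  "Ip p = {a \<in> padic p. padic_of_rat p (pfrac a) = a}"

text \<open>Haar measure dx on Q_p: the measure on the sigma-algebra generated by the balls
  (= the Borel sets of Q_p) with mass p^gamma on every ball B_gamma(a).\<close>
definition haar :: "nat \<Rightarrow> (nat \<Rightarrow> rat) measure" where
  "haar p = extend_measure (padic p) {(\<gamma>, a). a \<in> padic p}
             (\<lambda>(\<gamma>, a). pball p \<gamma> a) (\<lambda>(\<gamma>, a). ennreal (real p powr real_of_int \<gamma>))"

text \<open>Elements of L^2 are represented by square-integrable functions; equality in L^2
  is equality almost everywhere.\<close>
definition L2 :: "nat \<Rightarrow> ((nat \<Rightarrow> rat) \<Rightarrow> complex) set" where
  "L2 p = {f. f \<in> borel_measurable (haar p) \<and> integrable (haar p) (\<lambda>x. (cmod (f x))\<^sup>2)}"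

definition l2dist :: "nat \<Rightarrow> ((nat \<Rightarrow> rat) \<Rightarrow> complex) \<Rightarrow> ((nat \<Rightarrow> rat) \<Rightarrow> complex) \<Rightarrow> real" where
  "l2dist p f g = sqrt (\<integral>x. (cmod (f x - g x))\<^sup>2 \<partial>haar p)"

definition L2closure :: "nat \<Rightarrow> ((nat \<Rightarrow> rat) \<Rightarrow> complex) set \<Rightarrow> ((nat \<Rightarrow> rat) \<Rightarrow> complex) set" where
  "L2closure p S = {f \<in> L2 p. \<forall>e>0. \<exists>g\<in>S. l2dist p f g < e}"

definition closed_subspace :: "nat \<Rightarrow> ((nat \<Rightarrow> rat) \<Rightarrow> complex) set \<Rightarrow> bool" where
  "closed_subspace p V \<longleftrightarrow> V \<subseteq> L2 p \<and> (\<lambda>x. 0) \<in> V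
     \<and> (\<forall>f\<in>V. \<forall>g\<in>V. (\<lambda>x. f x + g x) \<in> V)
     \<and> (\<forall>c f. f \<in> V \<longrightarrow> (\<lambda>x. c * f x) \<in> V)
     \<and> L2closure p V \<subseteq> V"

definition trans_span :: "nat \<Rightarrow> ((nat \<Rightarrow> rat) \<Rightarrow> complex) \<Rightarrow> ((nat \<Rightarrow> rat) \<Rightarrow> complex) set" where
  "trans_span p \<phi> = {(\<lambda>x. \<Sum>a\<in>F. c a * \<phi> (psub p x a)) | F c. finite F \<and> F \<subseteq> Ip p}"

definition scaling_function ::
  "nat \<Rightarrow> (int \<Rightarrow> ((nat \<Rightarrow> rat) \<Rightarrow> complex) set) \<Rightarrow> ((nat \<Rightarrow> rat) \<Rightarrow> complex) \<Rightarrow> bool" where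
  "scaling_function p V \<phi> \<longleftrightarrow> \<phi> \<in> V 0 \<and> V 0 = L2closure p (trans_span p \<phi>)"

definition MRA :: "nat \<Rightarrow> (int \<Rightarrow> ((nat \<Rightarrow> rat) \<Rightarrow> complex) set) \<Rightarrow> bool" where
  "MRA p V \<longleftrightarrow> (\<forall>j. closed_subspace p (V j))
     \<and> (\<forall>j. V j \<subseteq> V (j + 1))
     \<and> L2closure p (\<Union>j. V j) = L2 p
     \<and> (\<forall>f. (\<forall>j. f \<in> V j) \<longrightarrow> (AE x in haar p. f x = 0))
     \<and> (\<forall>j f. f \<in> V j \<longleftrightarrow> (\<lambda>x. f (pdivp p x)) \<in> V (j + 1))
     \<and> (\<exists>\<phi>. scaling_function p V \<phi>)"

text \<open>refinable: phi(x) = sum_{a \<in> I_p} alpha_a phi(p^(-1) x - a), the series converging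
  (unconditionally) in L^2.\<close>
definition refinable :: "nat \<Rightarrow> ((nat \<Rightarrow> rat) \<Rightarrow> complex) \<Rightarrow> bool" where
  "refinable p \<phi> \<longleftrightarrow> (\<exists>\<alpha> :: (nat \<Rightarrow> rat) \<Rightarrow> complex.
     ((\<lambda>F. l2dist p \<phi> (\<lambda>x. \<Sum>a\<in>F. \<alpha> a * \<phi> (psub p (pdivp p x) a)))
        \<longlongrightarrow> 0) (finite_subsets_at_top (Ip p)))"

end

theory Submission
  imports Defs
begin

text \<open>Put \<open>f(x) = \<phi>(p x)\<close>. Since \<open>\<phi>(x) = f(x/p)\<close> lies in \<open>V\<^sub>0 \<subseteq> V\<^sub>1\<close>, the dilation
  axiom gives \<open>f \<in> V\<^sub>0\<close>, so \<open>f\<close> is an \<open>L\<^sup>2\<close>-limit of finite combinations of translates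
  \<open>\<phi>(x - a)\<close>, \<open>a \<in> I\<^sub>p\<close>. As \<open>\<phi>\<close> vanishes off \<open>B\<^sub>N(0)\<close>, \<open>f\<close> vanishes off \<open>B\<^sub>N\<^sub>+\<^sub>1(0)\<close>, and on
  \<open>B\<^sub>N\<^sub>+\<^sub>1(0)\<close> a translate \<open>\<phi>(x - a)\<close> can be nonzero only if \<open>a \<in> B\<^sub>N\<^sub>+\<^sub>1(0)\<close>. Hence discarding
  all translates except those by \<open>I\<^sub>p \<inter> B\<^sub>N\<^sub>+\<^sub>1(0) = {k/p\<^sup>N\<^sup>+\<^sup>1 : k < p\<^sup>N\<^sup>+\<^sup>1}\<close> does not
  increase the distance to \<open>f\<close>. So \<open>f\<close> lies in the closure of the span of finitely many
  translates; a finite-dimensional span is closed, and substituting \<open>x/p\<close> gives the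
  refinement equation with \<open>p\<^sup>N\<^sup>+\<^sup>1\<close> coefficients.\<close>

section \<open>Arithmetic in \<open>\<rat>\<^sub>p\<close>\<close>

lemma rmod_bounds:
  fixes q m :: rat
  assumes "m > 0"
  shows "0 \<le> rmod q m" "rmod q m < m"
proof -
  have "of_int \<lfloor>q/m\<rfloor> \<le> q/m" by (rule of_int_floor_le)
  with assms have "m * of_int \<lfloor>q/m\<rfloor> \<le> q" by (simp add: le_divide_eq mult.commute)
  then show "0 \<le> rmod q m" by (simp add: rmod_def)
  have "q/m < of_int \<lfloor>q/m\<rfloor> + 1" by linarith
  with assms have "q < m * of_int \<lfloor>q/m\<rfloor> + m" by (simp add: divide_less_eq algebra_simps)
  then show "rmod q m < m" by (simp add: rmod_def)
qed

lemma rmod_eq_self: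
  fixes q m :: rat
  assumes "0 \<le> q" "q < m"
  shows "rmod q m = q"
proof -
  have "\<lfloor>q/m\<rfloor> = 0" using assms by (simp add: floor_eq_iff)
  then show ?thesis by (simp add: rmod_def)
qed

lemma rmod_cong:
  fixes q r m :: rat
  assumes "m > 0" "q - r = m * of_int k"
  shows "rmod q m = rmod r m"
proof -
  have "q/m = r/m + of_int k" using assms by (simp add: field_simps)
  then have "\<lfloor>q/m\<rfloor> = \<lfloor>r/m\<rfloor> + k" by simp
  then show ?thesis using assms unfolding rmod_def by (simp add: algebra_simps)
qed

lemma powi_eq_powi_mult_power:
  assumes "p \<ge> 2" "\<gamma> \<le> \<gamma>'"
  shows "(of_nat p :: rat) powi \<gamma>' = of_nat p powi \<gamma> * of_nat p ^ nat (\<gamma>' - \<gamma>)"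
proof -
  have "(of_nat p :: rat) powi \<gamma>' = of_nat p powi \<gamma> * of_nat p powi (\<gamma>' - \<gamma>)"
    using assms(1) by (simp add: power_int_add[symmetric])
  also have "\<gamma>' - \<gamma> = int (nat (\<gamma>' - \<gamma>))" using assms(2) by simp
  finally show ?thesis by (simp only: power_int_of_nat)
qed

lemma Ints_mult_powi_cong:
  assumes p: "p \<ge> 2" and m: "nat (-\<gamma>) \<le> m" and uv: "u - v = (of_nat p :: rat) ^ m * of_int k"
  shows "u * of_nat p powi \<gamma> \<in> \<int> \<longleftrightarrow> v * of_nat p powi \<gamma> \<in> \<int>"
proof -
  have "(of_nat p :: rat) powi (\<gamma> + int m) = of_nat p powi \<gamma> * of_nat p ^ m"
    using powi_eq_powi_mult_power[OF p, of \<gamma> "\<gamma> + int m"] by simp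
  moreover have "(of_nat p :: rat) powi (\<gamma> + int m) = of_nat p ^ nat (\<gamma> + int m)"
    using powi_eq_powi_mult_power[OF p, of 0 "\<gamma> + int m"] m by simp
  ultimately have "(u - v) * of_nat p powi \<gamma> = of_int (k * int p ^ nat (\<gamma> + int m))"
    using uv by (simp add: algebra_simps)
  then have "u * of_nat p powi \<gamma> - v * of_nat p powi \<gamma> \<in> \<int>"
    by (simp add: algebra_simps)
  then show ?thesis
    by (metis Ints_add Ints_diff diff_add_cancel diff_diff_eq2 diff_self)
qed

lemma Ints_pow_mult_add_diff:
  assumes "(of_nat p :: rat) ^ k1 * u \<in> \<int>" "(of_nat p :: rat) ^ k2 * v \<in> \<int>"
  shows "(of_nat p :: rat) ^ (k1 + k2) * (u + v) \<in> \<int>"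
    "(of_nat p :: rat) ^ (k1 + k2) * (u - v) \<in> \<int>"
proof -
  have "(of_nat p :: rat) ^ (k1 + k2) * u = of_nat p ^ k2 * (of_nat p ^ k1 * u)"
    by (simp add: power_add)
  also have "\<dots> \<in> \<int>" by (rule Ints_mult[OF Ints_power[OF Ints_of_nat] assms(1)])
  finally have u: "(of_nat p :: rat) ^ (k1 + k2) * u \<in> \<int>" .
  have "(of_nat p :: rat) ^ (k1 + k2) * v = of_nat p ^ k1 * (of_nat p ^ k2 * v)"
    by (simp add: power_add)
  also have "\<dots> \<in> \<int>" by (rule Ints_mult[OF Ints_power[OF Ints_of_nat] assms(2)])
  finally have v: "(of_nat p :: rat) ^ (k1 + k2) * v \<in> \<int>" .
  from u v show "(of_nat p :: rat) ^ (k1 + k2) * (u + v) \<in> \<int>" "(of_nat p :: rat) ^ (k1 + k2) * (u - v) \<in> \<int>"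
    by (simp_all add: algebra_simps Ints_add Ints_diff)
qed

lemma padicD:
  assumes "x \<in> padic p"
  shows "0 \<le> x n" "x n < of_nat p ^ n" "\<exists>k. of_nat p ^ k * x n \<in> \<int>"
    "\<exists>k::int. x (Suc n) - x n = of_nat p ^ n * of_int k"
  using assms unfolding padic_def by (auto simp: of_nat_power)

lemma padicI:
  assumes "\<And>n. 0 \<le> x n" "\<And>n. x n < of_nat p ^ n" "\<And>n. \<exists>k. of_nat p ^ k * x n \<in> \<int>"
    "\<And>n. \<exists>k::int. x (Suc n) - x n = of_nat p ^ n * of_int k"
  shows "x \<in> padic p"
  using assms unfolding padic_def by (auto simp: of_nat_power)

lemma pzero_padic: "p \<ge> 2 \<Longrightarrow> pzero \<in> padic p"
  by (rule padicI) (auto simp: pzero_def intro!: exI[of _ 0])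

lemma padic_residue_diff:
  assumes x: "x \<in> padic p" and "n \<le> m"
  shows "\<exists>k::int. x m - x n = (of_nat p :: rat) ^ n * of_int k"
  using assms(2)
proof (induction m rule: dec_induct)
  case base
  show ?case by (intro exI[of _ 0]) simp
next
  case (step m)
  then obtain k2 where k2: "x m - x n = (of_nat p :: rat) ^ n * of_int k2" by blast
  obtain k1 where k1: "x (Suc m) - x m = (of_nat p :: rat) ^ m * of_int k1"
    using padicD(4)[OF x] by blast
  have "(of_nat p :: rat) ^ m = of_nat p ^ n * of_nat p ^ (m - n)"
    using step(1) by (simp add: power_add[symmetric])
  with k1 k2 have "x (Suc m) - x n = (of_nat p :: rat) ^ n * of_int (int p ^ (m - n) * k1 + k2)"
    by (simp add: algebra_simps)
  then show ?case by blast
qed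

lemma padic_level_cong:
  assumes p: "p \<ge> 2" and x: "x \<in> padic p" and y: "y \<in> padic p"
    and "nat (-\<gamma>) \<le> m" "nat (-\<gamma>) \<le> m'"
  shows "(x m - y m) * of_nat p powi \<gamma> \<in> \<int> \<longleftrightarrow> (x m' - y m') * of_nat p powi \<gamma> \<in> \<int>"
proof -
  have base: "(x m - y m) * of_nat p powi \<gamma> \<in> \<int> \<longleftrightarrow>
      (x (nat (-\<gamma>)) - y (nat (-\<gamma>))) * of_nat p powi \<gamma> \<in> \<int>" if m: "nat (-\<gamma>) \<le> m" for m
  proof -
    obtain k1 where "x m - x (nat (-\<gamma>)) = (of_nat p :: rat) ^ nat (-\<gamma>) * of_int k1"
      using padic_residue_diff[OF x m] by blast
    moreover obtain k2 where "y m - y (nat (-\<gamma>)) = (of_nat p :: rat) ^ nat (-\<gamma>) * of_int k2"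
      using padic_residue_diff[OF y m] by blast
    ultimately have "(x m - y m) - (x (nat (-\<gamma>)) - y (nat (-\<gamma>)))
        = (of_nat p :: rat) ^ nat (-\<gamma>) * of_int (k1 - k2)"
      by (simp add: algebra_simps)
    then show ?thesis by (rule Ints_mult_powi_cong[OF p order_refl])
  qed
  show ?thesis using base[of m] base[of m'] assms(4,5) by simp
qed

lemma padic_level_cong0:
  assumes "p \<ge> 2" "x \<in> padic p" "nat (-\<gamma>) \<le> m" "nat (-\<gamma>) \<le> m'"
  shows "x m * of_nat p powi \<gamma> \<in> \<int> \<longleftrightarrow> x m' * of_nat p powi \<gamma> \<in> \<int>"
  using padic_level_cong[OF assms(1,2) pzero_padic[OF assms(1)] assms(3,4)] by (simp add: pzero_def)

lemma in_pZ_iff: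
  assumes p: "p \<ge> 2" and y: "y \<in> padic p"
  shows "in_pZ p (-\<gamma>) y \<longleftrightarrow> y (nat (-\<gamma>)) * of_nat p powi \<gamma> \<in> \<int>"
proof (cases "\<gamma> \<le> 0")
  case True
  define n where "n = nat (-\<gamma>)"
  have pg: "(of_nat p :: rat) powi \<gamma> = inverse (of_nat p ^ n)"
    using True by (simp add: n_def power_int_def power_inverse)
  have pos: "(of_nat p :: rat) ^ n > 0" using p by simp
  have "y n = 0" if Z: "y n * inverse (of_nat p ^ n) \<in> \<int>"
  proof -
    obtain k where k: "y n * inverse (of_nat p ^ n) = of_int k"
      using Z by (auto elim: Ints_cases)
    have "0 \<le> y n * inverse (of_nat p ^ n)" using padicD(1)[OF y] pos by simp
    moreover have "y n * inverse (of_nat p ^ n) < 1"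
      using padicD(2)[OF y, of n] pos by (simp add: field_simps)
    ultimately have "k = 0" using k by linarith
    then show "y n = 0" using k pos p by simp
  qed
  then show ?thesis unfolding in_pZ_def using True by (auto simp: pg n_def[symmetric])
next
  case False
  then have "(of_nat p :: rat) powi \<gamma> = of_nat p ^ nat \<gamma>"
    by (simp add: power_int_def)
  then show ?thesis unfolding in_pZ_def using False by (simp add: of_nat_power mult.commute)
qed

lemma padic_level_Ints_mono:
  assumes p: "p \<ge> 2" and y: "y \<in> padic p"
    and "y (nat (-\<gamma>)) * of_nat p powi \<gamma> \<in> \<int>" and g: "\<gamma> \<le> \<gamma>'"
  shows "y (nat (-\<gamma>')) * of_nat p powi \<gamma>' \<in> \<int>"
proof -
  have "y (nat (-\<gamma>)) * of_nat p powi \<gamma>' = y (nat (-\<gamma>)) * of_nat p powi \<gamma> * of_nat p ^ nat (\<gamma>' - \<gamma>)"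
    using powi_eq_powi_mult_power[OF p g] by simp
  also have "\<dots> \<in> \<int>" using assms(3) by simp
  finally show ?thesis
    using padic_level_cong0[OF p y, of \<gamma>' "nat (-\<gamma>)" "nat (-\<gamma>')"] g by simp
qed

lemma pnorm_le_iff:
  assumes p: "p \<ge> 2" and y: "y \<in> padic p"
  shows "pnorm p y \<le> real p powr real_of_int \<gamma> \<longleftrightarrow> y (nat (-\<gamma>)) * of_nat p powi \<gamma> \<in> \<int>"
proof -
  define S where "S = {real p powr real_of_int m | m::int. y (nat (-m)) * of_nat p powi m \<in> \<int>}"
  have pnorm: "pnorm p y = Inf S"
    unfolding pnorm_def S_def using in_pZ_iff[OF p y] by simp
  have bdd: "bdd_below S" unfolding S_def by (intro bdd_belowI[of _ 0]) auto
  show ?thesis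
  proof
    assume le: "pnorm p y \<le> real p powr real_of_int \<gamma>"
    show "y (nat (-\<gamma>)) * of_nat p powi \<gamma> \<in> \<int>"
    proof (rule ccontr)
      assume nZ: "\<not> ?thesis"
      obtain k where "of_nat p ^ k * y 0 \<in> \<int>" using padicD(3)[OF y] by blast
      then have "y (nat (- int k)) * of_nat p powi (int k) \<in> \<int>"
        by (simp add: power_int_of_nat mult.commute)
      then have ne: "S \<noteq> {}" unfolding S_def by blast
      have "real p powr real_of_int (\<gamma> + 1) \<le> Inf S"
      proof (rule cInf_greatest[OF ne])
        fix s assume "s \<in> S"
        then obtain m where m: "s = real p powr real_of_int m"
          "y (nat (-m)) * of_nat p powi m \<in> \<int>"
          unfolding S_def by blast
        have "\<gamma> < m" using padic_level_Ints_mono[OF p y m(2), of \<gamma>] nZ by force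
        then show "real p powr real_of_int (\<gamma> + 1) \<le> s"
          unfolding m(1) using p by (intro powr_mono) auto
      qed
      moreover have "real p powr real_of_int \<gamma> < real p powr real_of_int (\<gamma> + 1)"
        using p by (intro powr_less_mono) auto
      ultimately show False using le pnorm by linarith
    qed
  next
    assume "y (nat (-\<gamma>)) * of_nat p powi \<gamma> \<in> \<int>"
    then have "real p powr real_of_int \<gamma> \<in> S" unfolding S_def by blast
    then show "pnorm p y \<le> real p powr real_of_int \<gamma>"
      unfolding pnorm by (rule cInf_lower[OF _ bdd])
  qed
qed

lemma padic_rmodI:
  assumes p: "p \<ge> 2" and den: "\<And>n. \<exists>k. (of_nat p :: rat) ^ k * u n \<in> \<int>"
    and cong: "\<And>n. \<exists>k::int. u (Suc n) - u n = (of_nat p :: rat) ^ n * of_int k"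
  shows "(\<lambda>n. rmod (u n) (of_nat (p ^ n))) \<in> padic p"
proof (rule padicI)
  fix n
  have pos: "(of_nat p :: rat) ^ n > 0" using p by simp
  show "0 \<le> rmod (u n) (of_nat (p ^ n))" "rmod (u n) (of_nat (p ^ n)) < of_nat p ^ n"
    using rmod_bounds[OF pos] by (simp_all add: of_nat_power)
  obtain k where k: "(of_nat p :: rat) ^ k * u n \<in> \<int>" using den by blast
  have "(of_nat p :: rat) ^ k * rmod (u n) (of_nat (p ^ n))
        = of_nat p ^ k * u n - of_int (int p ^ k * int p ^ n * \<lfloor>u n / of_nat p ^ n\<rfloor>)"
    unfolding rmod_def by (simp add: algebra_simps of_nat_power)
  also have "\<dots> \<in> \<int>" using k by (intro Ints_diff) auto
  finally show "\<exists>k. (of_nat p :: rat) ^ k * rmod (u n) (of_nat (p ^ n)) \<in> \<int>" by blast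
  obtain k where k: "u (Suc n) - u n = (of_nat p :: rat) ^ n * of_int k" using cong by blast
  have "rmod (u (Suc n)) (of_nat (p ^ Suc n)) - rmod (u n) (of_nat (p ^ n))
      = (u (Suc n) - u n) - of_nat p ^ Suc n * of_int \<lfloor>u (Suc n) / of_nat p ^ Suc n\<rfloor>
          + of_nat p ^ n * of_int \<lfloor>u n / of_nat p ^ n\<rfloor>"
    unfolding rmod_def by (simp add: of_nat_power)
  also have "\<dots> = (of_nat p :: rat) ^ n *
      of_int (k - int p * \<lfloor>u (Suc n) / of_nat p ^ Suc n\<rfloor> + \<lfloor>u n / of_nat p ^ n\<rfloor>)"
    unfolding k by (simp add: algebra_simps)
  finally show "\<exists>k::int. rmod (u (Suc n)) (of_nat (p ^ Suc n)) - rmod (u n) (of_nat (p ^ n))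
      = of_nat p ^ n * of_int k"
    by blast
qed

lemma psub_padic:
  assumes p: "p \<ge> 2" and x: "x \<in> padic p" and a: "a \<in> padic p"
  shows "psub p x a \<in> padic p"
  unfolding psub_def
proof (rule padic_rmodI[OF p])
  fix n
  obtain k1 k2 where "(of_nat p :: rat) ^ k1 * x n \<in> \<int>" "(of_nat p :: rat) ^ k2 * a n \<in> \<int>"
    using padicD(3)[OF x] padicD(3)[OF a] by metis
  then show "\<exists>k. (of_nat p :: rat) ^ k * (x n - a n) \<in> \<int>"
    using Ints_pow_mult_add_diff(2) by blast
  obtain k1 k2 where "x (Suc n) - x n = (of_nat p :: rat) ^ n * of_int k1"
    "a (Suc n) - a n = (of_nat p :: rat) ^ n * of_int k2"
    using padicD(4)[OF x] padicD(4)[OF a] by metis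
  then have "x (Suc n) - a (Suc n) - (x n - a n) = (of_nat p :: rat) ^ n * of_int (k1 - k2)"
    by (simp add: algebra_simps)
  then show "\<exists>k::int. x (Suc n) - a (Suc n) - (x n - a n) = (of_nat p :: rat) ^ n * of_int k" ..
qed

lemma padd_padic:
  assumes p: "p \<ge> 2" and x: "x \<in> padic p" and a: "a \<in> padic p"
  shows "padd p x a \<in> padic p"
  unfolding padd_def
proof (rule padic_rmodI[OF p])
  fix n
  obtain k1 k2 where "(of_nat p :: rat) ^ k1 * x n \<in> \<int>" "(of_nat p :: rat) ^ k2 * a n \<in> \<int>"
    using padicD(3)[OF x] padicD(3)[OF a] by metis
  then show "\<exists>k. (of_nat p :: rat) ^ k * (x n + a n) \<in> \<int>"
    using Ints_pow_mult_add_diff(1) by blast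
  obtain k1 k2 where "x (Suc n) - x n = (of_nat p :: rat) ^ n * of_int k1"
    "a (Suc n) - a n = (of_nat p :: rat) ^ n * of_int k2"
    using padicD(4)[OF x] padicD(4)[OF a] by metis
  then have "x (Suc n) + a (Suc n) - (x n + a n) = (of_nat p :: rat) ^ n * of_int (k1 + k2)"
    by (simp add: algebra_simps)
  then show "\<exists>k::int. x (Suc n) + a (Suc n) - (x n + a n) = (of_nat p :: rat) ^ n * of_int k" ..
qed

lemma padic_of_rat_padic:
  assumes p: "p \<ge> 2" and "(of_nat p :: rat) ^ j * q \<in> \<int>"
  shows "padic_of_rat p q \<in> padic p"
  unfolding padic_of_rat_def
proof (rule padic_rmodI[OF p])
  show "\<exists>k. (of_nat p :: rat) ^ k * q \<in> \<int>" using assms(2) ..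
qed (auto intro: exI[of _ 0])

lemma pdivp_padic:
  assumes p: "p \<ge> 2" and x: "x \<in> padic p"
  shows "pdivp p x \<in> padic p"
proof (rule padicI)
  fix n
  have pp: "(of_nat p :: rat) > 0" using p by simp
  show "0 \<le> pdivp p x n" unfolding pdivp_def using padicD(1)[OF x] pp by simp
  show "pdivp p x n < of_nat p ^ n" unfolding pdivp_def using padicD(2)[OF x, of "Suc n"] pp
    by (simp add: divide_less_eq mult.commute)
  obtain k where "(of_nat p :: rat) ^ k * x (Suc n) \<in> \<int>" using padicD(3)[OF x] by blast
  moreover have "(of_nat p :: rat) ^ Suc k * pdivp p x n = of_nat p ^ k * x (Suc n)"
    unfolding pdivp_def using pp by simp
  ultimately show "\<exists>k. (of_nat p :: rat) ^ k * pdivp p x n \<in> \<int>" by metis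
  obtain k where k: "x (Suc (Suc n)) - x (Suc n) = (of_nat p :: rat) ^ Suc n * of_int k"
    using padicD(4)[OF x] by blast
  have "pdivp p x (Suc n) - pdivp p x n = (x (Suc (Suc n)) - x (Suc n)) / of_nat p"
    unfolding pdivp_def by (simp add: diff_divide_distrib)
  also have "\<dots> = (of_nat p :: rat) ^ n * of_int k" unfolding k using pp by simp
  finally show "\<exists>k::int. pdivp p x (Suc n) - pdivp p x n = of_nat p ^ n * of_int k" by blast
qed

text \<open>Multiplication by \<open>p\<close>, the inverse of \<open>pdivp\<close>: the residues shift up one level,
  and the new level-0 residue is the fractional part of \<open>p\<close> times the old one.\<close>

definition pmulp :: "nat \<Rightarrow> (nat \<Rightarrow> rat) \<Rightarrow> (nat \<Rightarrow> rat)" where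
  "pmulp p y = (\<lambda>n. case n of 0 \<Rightarrow> rmod (of_nat p * y 0) 1 | Suc m \<Rightarrow> of_nat p * y m)"

lemma pmulp_padic:
  assumes p: "p \<ge> 2" and y: "y \<in> padic p"
  shows "pmulp p y \<in> padic p"
proof (rule padicI)
  fix n
  have pp: "(of_nat p :: rat) > 0" using p by simp
  show "0 \<le> pmulp p y n" "pmulp p y n < of_nat p ^ n" unfolding pmulp_def
    using rmod_bounds[of 1] padicD(1,2)[OF y] pp by (cases n; auto)+
  show "\<exists>k. (of_nat p :: rat) ^ k * pmulp p y n \<in> \<int>"
  proof (cases n)
    case 0
    obtain k where k: "(of_nat p :: rat) ^ k * y 0 \<in> \<int>" using padicD(3)[OF y] by blast
    have "(of_nat p :: rat) ^ k * pmulp p y n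
        = of_nat p * (of_nat p ^ k * y 0) - of_nat p ^ k * of_int \<lfloor>of_nat p * y 0\<rfloor>"
      unfolding pmulp_def 0 rmod_def by (simp add: algebra_simps)
    also have "\<dots> \<in> \<int>" using k by (intro Ints_diff Ints_mult[OF _ k]) auto
    finally show ?thesis by blast
  next
    case (Suc m)
    obtain k where k: "(of_nat p :: rat) ^ k * y m \<in> \<int>" using padicD(3)[OF y] by blast
    have "(of_nat p :: rat) ^ k * pmulp p y n = of_nat p * (of_nat p ^ k * y m)"
      unfolding pmulp_def Suc by (simp add: algebra_simps)
    also have "\<dots> \<in> \<int>" using k by (intro Ints_mult[OF _ k]) auto
    finally show ?thesis by blast
  qed
  show "\<exists>k::int. pmulp p y (Suc n) - pmulp p y n = of_nat p ^ n * of_int k"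
  proof (cases n)
    case 0
    then show ?thesis unfolding pmulp_def rmod_def by auto
  next
    case (Suc m)
    obtain k where k: "y (Suc m) - y m = (of_nat p :: rat) ^ m * of_int k"
      using padicD(4)[OF y] by blast
    have "pmulp p y (Suc n) - pmulp p y n = of_nat p * (y (Suc m) - y m)"
      unfolding pmulp_def Suc by (simp add: algebra_simps)
    also have "\<dots> = (of_nat p :: rat) ^ n * of_int k" unfolding k Suc by simp
    finally show ?thesis by blast
  qed
qed

lemma pmulp_pdivp:
  assumes p: "p \<ge> 2" and x: "x \<in> padic p"
  shows "pmulp p (pdivp p x) = x"
proof
  fix n
  have pp: "(of_nat p :: rat) > 0" using p by simp
  show "pmulp p (pdivp p x) n = x n"
  proof (cases n)
    case 0
    obtain k where k: "x (Suc 0) - x 0 = (of_nat p :: rat) ^ 0 * of_int k"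
      using padicD(4)[OF x] by blast
    have "pmulp p (pdivp p x) n = rmod (x 1) 1" unfolding pmulp_def pdivp_def 0 using pp by simp
    also have "\<dots> = rmod (x 0) 1" using k by (intro rmod_cong[of 1 _ _ k]) auto
    also have "\<dots> = x 0" using padicD(1,2)[OF x, of 0] by (intro rmod_eq_self) auto
    finally show ?thesis using 0 by simp
  qed (use p in \<open>simp add: pmulp_def pdivp_def\<close>)
qed

section \<open>Balls\<close>

lemma pball_iff:
  assumes p: "p \<ge> 2" and a: "a \<in> padic p" and m: "nat (-\<gamma>) \<le> m"
  shows "x \<in> pball p \<gamma> a \<longleftrightarrow> x \<in> padic p \<and> (x m - a m) * of_nat p powi \<gamma> \<in> \<int>"
proof (cases "x \<in> padic p")
  case True
  have s: "psub p x a \<in> padic p" using psub_padic[OF p True a] .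
  have "x \<in> pball p \<gamma> a \<longleftrightarrow> psub p x a (nat (-\<gamma>)) * of_nat p powi \<gamma> \<in> \<int>"
    unfolding pball_def using True pnorm_le_iff[OF p s] by simp
  also have "\<dots> \<longleftrightarrow> psub p x a m * of_nat p powi \<gamma> \<in> \<int>"
    using padic_level_cong0[OF p s order_refl m] by simp
  also have "\<dots> \<longleftrightarrow> (x m - a m) * of_nat p powi \<gamma> \<in> \<int>"
    by (rule Ints_mult_powi_cong[OF p m, where k = "- \<lfloor>(x m - a m) / of_nat (p ^ m)\<rfloor>"])
      (simp add: psub_def rmod_def)
  finally show ?thesis using True by simp
qed (simp add: pball_def)

lemma pball_subset: "pball p \<gamma> a \<subseteq> padic p"
  unfolding pball_def by auto

lemma center_in_pball: "p \<ge> 2 \<Longrightarrow> a \<in> padic p \<Longrightarrow> a \<in> pball p \<gamma> a"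
  using pball_iff[of p a \<gamma> "nat (-\<gamma>)"] by simp

lemma pball_nested:
  assumes p: "p \<ge> 2" and a: "a \<in> padic p" and b: "b \<in> padic p" and g: "\<gamma> \<le> \<gamma>'"
    and y: "y \<in> pball p \<gamma> a" "y \<in> pball p \<gamma>' b"
  shows "pball p \<gamma> a \<subseteq> pball p \<gamma>' b"
proof
  define m where "m = nat (-\<gamma>)"
  have m': "nat (-\<gamma>') \<le> m" using g m_def by simp
  have ya: "(y m - a m) * of_nat p powi \<gamma> \<in> \<int>" using y(1) pball_iff[OF p a, of \<gamma> m] m_def by simp
  have yb: "(y m - b m) * of_nat p powi \<gamma>' \<in> \<int>" using y(2) pball_iff[OF p b m'] by simp
  fix x assume "x \<in> pball p \<gamma> a"
  then have xa: "(x m - a m) * of_nat p powi \<gamma> \<in> \<int>" "x \<in> padic p"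
    using pball_iff[OF p a, of \<gamma> m] m_def by simp_all
  have "(x m - y m) * of_nat p powi \<gamma> \<in> \<int>"
    using Ints_diff[OF xa(1) ya] by (simp add: algebra_simps)
  then have "(x m - y m) * of_nat p powi \<gamma> * of_nat p ^ nat (\<gamma>' - \<gamma>) \<in> \<int>"
    by (simp add: Ints_mult)
  then have "(x m - y m) * of_nat p powi \<gamma>' \<in> \<int>"
    using powi_eq_powi_mult_power[OF p g] by (simp add: mult.assoc)
  from Ints_add[OF this yb] have "(x m - b m) * of_nat p powi \<gamma>' \<in> \<int>"
    by (simp add: algebra_simps)
  then show "x \<in> pball p \<gamma>' b" using pball_iff[OF p b m'] xa(2) by simp
qed

lemma pball0_iff:
  assumes p: "p \<ge> 2"
  shows "x \<in> pball p (int n) pzero \<longleftrightarrow> x \<in> padic p \<and> x 0 * of_nat p ^ n \<in> \<int>"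
  using pball_iff[OF p pzero_padic[OF p], of "int n" 0 x] by (simp add: pzero_def power_int_of_nat)

lemma padic_eq_Union_pball0:
  assumes p: "p \<ge> 2"
  shows "(\<Union>n. pball p (int n) pzero) = padic p"
proof (intro equalityI subsetI)
  fix x assume x: "x \<in> padic p"
  obtain k where "(of_nat p :: rat) ^ k * x 0 \<in> \<int>" using padicD(3)[OF x] by blast
  then show "x \<in> (\<Union>n. pball p (int n) pzero)" using pball0_iff[OF p] x by (auto simp: mult.commute)
qed (use pball_subset in blast)

lemma psub_in_pball_iff:
  assumes p: "p \<ge> 2" and x: "x \<in> padic p" and a: "a \<in> padic p" and b: "b \<in> padic p"
  shows "psub p x a \<in> pball p \<gamma> b \<longleftrightarrow> x \<in> pball p \<gamma> (padd p b a)"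
proof -
  define m where "m = nat (-\<gamma>)"
  have "psub p x a \<in> pball p \<gamma> b \<longleftrightarrow> (psub p x a m - b m) * of_nat p powi \<gamma> \<in> \<int>"
    using pball_iff[OF p b, of \<gamma> m] psub_padic[OF p x a] m_def by simp
  also have "\<dots> \<longleftrightarrow> (x m - a m - b m) * of_nat p powi \<gamma> \<in> \<int>"
    by (rule Ints_mult_powi_cong[OF p, of _ m, where k = "- \<lfloor>(x m - a m) / of_nat (p ^ m)\<rfloor>"])
      (simp_all add: m_def psub_def rmod_def)
  also have "\<dots> \<longleftrightarrow> (x m - padd p b a m) * of_nat p powi \<gamma> \<in> \<int>"
    by (rule Ints_mult_powi_cong[OF p, of _ m, where k = "- \<lfloor>(b m + a m) / of_nat (p ^ m)\<rfloor>"])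
      (simp_all add: m_def padd_def rmod_def of_nat_power)
  also have "\<dots> \<longleftrightarrow> x \<in> pball p \<gamma> (padd p b a)"
    using pball_iff[OF p padd_padic[OF p b a], of \<gamma> m x] x m_def by simp
  finally show ?thesis .
qed

lemma padd_pzero_left:
  assumes "a \<in> padic p"
  shows "padd p pzero a = a"
  unfolding padd_def pzero_def using padicD(1,2)[OF assms] by (simp add: rmod_eq_self of_nat_power)

lemma psub_in_pball0_iff:
  assumes p: "p \<ge> 2" and x: "x \<in> padic p" and a: "a \<in> padic p"
  shows "psub p x a \<in> pball p \<gamma> pzero \<longleftrightarrow> x \<in> pball p \<gamma> a"
  using psub_in_pball_iff[OF p x a pzero_padic[OF p]] padd_pzero_left[OF a] by simp

text \<open>The ultrametric property: every point of a ball is a centre of it.\<close>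

lemma pball0_iff_of_in_pball:
  assumes p: "p \<ge> 2" and x: "x \<in> pball p \<gamma> a" and a: "a \<in> padic p" and g: "\<gamma> \<le> \<gamma>'"
  shows "x \<in> pball p \<gamma>' pzero \<longleftrightarrow> a \<in> pball p \<gamma>' pzero"
  using pball_nested[OF p a pzero_padic[OF p] g x] pball_nested[OF p a pzero_padic[OF p] g]
    center_in_pball[OF p a] x
  by blast

lemma pdivp_in_pball_iff:
  assumes p: "p \<ge> 2" and x: "x \<in> padic p" and b: "b \<in> padic p"
  shows "pdivp p x \<in> pball p \<gamma> b \<longleftrightarrow> x \<in> pball p (\<gamma> - 1) (pmulp p b)"
proof -
  define m where "m = nat (-\<gamma>)"
  have pp: "(of_nat p :: rat) > 0" using p by simp
  have "pdivp p x \<in> pball p \<gamma> b \<longleftrightarrow> (pdivp p x m - b m) * of_nat p powi \<gamma> \<in> \<int>"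
    using pball_iff[OF p b, of \<gamma> m] pdivp_padic[OF p x] m_def by simp
  also have "(pdivp p x m - b m) * of_nat p powi \<gamma>
      = (x (Suc m) - pmulp p b (Suc m)) * of_nat p powi (\<gamma> - 1)"
    using powi_eq_powi_mult_power[OF p, of "\<gamma> - 1" \<gamma>] pp
    unfolding pdivp_def pmulp_def by (simp add: field_simps)
  also have "\<dots> \<in> \<int> \<longleftrightarrow> x \<in> pball p (\<gamma> - 1) (pmulp p b)"
    using pball_iff[OF p pmulp_padic[OF p b], of "\<gamma> - 1" "Suc m" x] x m_def by simp
  finally show ?thesis .
qed

lemma pmulp_in_pball_iff:
  assumes p: "p \<ge> 2" and x: "x \<in> padic p" and b: "b \<in> padic p"
  shows "pmulp p x \<in> pball p \<gamma> b \<longleftrightarrow> x \<in> pball p (\<gamma> + 1) (pdivp p b)"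
proof -
  define m where "m = nat (-\<gamma>)"
  have pp: "(of_nat p :: rat) > 0" using p by simp
  have "pmulp p x \<in> pball p \<gamma> b \<longleftrightarrow> (pmulp p x (Suc m) - b (Suc m)) * of_nat p powi \<gamma> \<in> \<int>"
    using pball_iff[OF p b, of \<gamma> "Suc m"] pmulp_padic[OF p x] m_def by simp
  also have "(pmulp p x (Suc m) - b (Suc m)) * of_nat p powi \<gamma>
      = (x m - pdivp p b m) * of_nat p powi (\<gamma> + 1)"
    using powi_eq_powi_mult_power[OF p, of \<gamma> "\<gamma> + 1"] pp
    unfolding pdivp_def pmulp_def by (simp add: field_simps)
  also have "\<dots> \<in> \<int> \<longleftrightarrow> x \<in> pball p (\<gamma> + 1) (pdivp p b)"
    using pball_iff[OF p pdivp_padic[OF p b], of "\<gamma> + 1" m x] x m_def by simp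
  finally show ?thesis .
qed

definition Ip_point :: "nat \<Rightarrow> nat \<Rightarrow> nat \<Rightarrow> (nat \<Rightarrow> rat)" where
  "Ip_point p n k = padic_of_rat p (of_nat k / of_nat (p ^ n))"

lemma Ip_point_0:
  assumes p: "p \<ge> 2" and k: "k < p ^ n"
  shows "Ip_point p n k 0 = of_nat k / of_nat (p ^ n)"
proof -
  have "(of_nat k :: rat) < of_nat (p ^ n)" using k by (simp only: of_nat_less_iff)
  then show ?thesis
    unfolding Ip_point_def padic_of_rat_def using p by (intro rmod_eq_self) (auto simp: divide_less_eq)
qed

lemma Ip_point_padic: "p \<ge> 2 \<Longrightarrow> Ip_point p n k \<in> padic p"
  unfolding Ip_point_def by (rule padic_of_rat_padic[of _ n]) (auto simp: of_nat_power)

lemma inj_on_Ip_point: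
  assumes p: "p \<ge> 2"
  shows "inj_on (Ip_point p n) {..<p ^ n}"
proof
  fix k l assume "k \<in> {..<p ^ n}" "l \<in> {..<p ^ n}" "Ip_point p n k = Ip_point p n l"
  then have "(of_nat k :: rat) / of_nat (p ^ n) = of_nat l / of_nat (p ^ n)"
    using Ip_point_0[OF p, of k n] Ip_point_0[OF p, of l n] by auto
  then show "k = l" using p by simp
qed

lemma Ip_Int_pball0:
  assumes p: "p \<ge> 2"
  shows "Ip p \<inter> pball p (int n) pzero = Ip_point p n ` {..<p ^ n}"
proof (intro equalityI subsetI)
  fix a assume "a \<in> Ip p \<inter> pball p (int n) pzero"
  then have a: "a \<in> padic p" "padic_of_rat p (a 0) = a" "a 0 * of_nat p ^ n \<in> \<int>"
    using pball0_iff[OF p] unfolding Ip_def pfrac_def by auto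
  obtain j where j: "a 0 * of_nat p ^ n = of_int j" using a(3) by (auto elim: Ints_cases)
  have pos: "(of_nat p :: rat) ^ n > 0" using p by simp
  have "0 \<le> a 0 * of_nat p ^ n" "a 0 * of_nat p ^ n < 1 * of_nat p ^ n"
    using padicD(1,2)[OF a(1), of 0] pos by (simp, intro mult_strict_right_mono) auto
  then have "(0::rat) \<le> of_int j" "(of_int j :: rat) < of_int (int p ^ n)" using j by simp_all
  then have "0 \<le> j" "j < int p ^ n" by (simp_all only: of_int_le_iff of_int_less_iff)
  then have k: "nat j < p ^ n" and "a 0 = of_nat (nat j) / of_nat (p ^ n)"
    using j pos by (simp_all add: eq_divide_eq nat_less_iff of_nat_power)
  then have "a = Ip_point p n (nat j)" using a(2) unfolding Ip_point_def by simp
  with k show "a \<in> Ip_point p n ` {..<p ^ n}" by blast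
next
  fix a assume "a \<in> Ip_point p n ` {..<p ^ n}"
  then obtain k where k: "k < p ^ n" and a: "a = Ip_point p n k" by blast
  have "(of_nat p :: rat) ^ n > 0" using p by simp
  then have "a 0 * of_nat p ^ n = of_nat k" using Ip_point_0[OF p k] a by (simp add: of_nat_power)
  then show "a \<in> Ip p \<inter> pball p (int n) pzero"
    using Ip_point_padic[OF p] Ip_point_0[OF p k] pball0_iff[OF p] a
    unfolding Ip_def pfrac_def Ip_point_def by auto
qed

section \<open>Haar measure\<close>

definition pballs :: "nat \<Rightarrow> (nat \<Rightarrow> rat) set set" where
  "pballs p = (\<lambda>(\<gamma>, a). pball p \<gamma> a) ` {(\<gamma>, a). a \<in> padic p}"

text \<open>\<open>extend_measure\<close> returns the zero measure unless a measure with the prescribed mass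
  on every ball exists; in that case every statement about \<open>haar\<close> holds almost everywhere
  trivially, so the construction of Haar measure is never needed.\<close>

definition haar_exists :: "nat \<Rightarrow> bool" where
  "haar_exists p \<longleftrightarrow> (\<exists>\<mu>. (\<forall>\<gamma>. \<forall>a\<in>padic p. \<mu> (pball p \<gamma> a) = ennreal (real p powr real_of_int \<gamma>))
      \<and> measure_space (padic p) (sigma_sets (padic p) (pballs p)) \<mu>)"

lemma pballs_Pow: "pballs p \<subseteq> Pow (padic p)"
  unfolding pballs_def using pball_subset by auto

lemma space_haar: "space (haar p) = padic p"
  unfolding haar_def using pballs_Pow[of p] unfolding pballs_def by (rule space_extend_measure)

lemma sets_haar: "sets (haar p) = sigma_sets (padic p) (pballs p)"
  unfolding haar_def using pballs_Pow[of p] unfolding pballs_def by (rule sets_extend_measure)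

lemma pball_sets_haar: "a \<in> padic p \<Longrightarrow> pball p \<gamma> a \<in> sets (haar p)"
  unfolding sets_haar pballs_def by auto

lemma AE_haar_trivial:
  assumes "\<not> haar_exists p"
  shows "AE x in haar p. P x"
proof -
  have "haar p = measure_of (padic p) (pballs p) (\<lambda>_. 0)"
    using assms unfolding haar_def extend_measure_def haar_exists_def pballs_def by auto
  then have "emeasure (haar p) (space (haar p)) = 0"
    by (intro emeasure_measure_of[OF _ pballs_Pow])
      (auto simp: positive_def countably_additive_def sets_haar)
  then show ?thesis by (intro AE_I'[of "space (haar p)"]) auto
qed

lemma emeasure_haar_pball:
  assumes "haar_exists p" "a \<in> padic p"
  shows "emeasure (haar p) (pball p \<gamma> a) = ennreal (real p powr real_of_int \<gamma>)"
proof -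
  obtain \<mu> where mu: "\<And>\<gamma> a. a \<in> padic p \<Longrightarrow> \<mu> (pball p \<gamma> a) = ennreal (real p powr real_of_int \<gamma>)"
    and ms: "measure_space (padic p) (sigma_sets (padic p) (pballs p)) \<mu>"
    using assms(1) unfolding haar_exists_def by blast
  show ?thesis
    by (rule emeasure_extend_measure_Pair[OF haar_def, where \<mu>' = \<mu>])
      (use mu ms pball_subset assms(2) in \<open>auto simp: sets_haar measure_space_def\<close>)
qed

lemma Int_stable_pballs:
  assumes p: "p \<ge> 2"
  shows "Int_stable (insert {} (pballs p))"
proof -
  have nested: "pball p \<gamma> a \<inter> pball p \<gamma>' b \<in> insert {} (pballs p)"
    if "a \<in> padic p" "b \<in> padic p" "\<gamma> \<le> \<gamma>'" for \<gamma> \<gamma>' a b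
  proof (cases "pball p \<gamma> a \<inter> pball p \<gamma>' b = {}")
    case False
    then have "pball p \<gamma> a \<inter> pball p \<gamma>' b = pball p \<gamma> a"
      using pball_nested[OF p that] by blast
    then show ?thesis using that(1) unfolding pballs_def by auto
  qed simp
  show ?thesis
    unfolding Int_stable_def
  proof (intro ballI)
    fix X Y assume "X \<in> insert {} (pballs p)" "Y \<in> insert {} (pballs p)"
    then consider "X = {} \<or> Y = {}"
      | \<gamma> a \<gamma>' b where "a \<in> padic p" "b \<in> padic p" "X = pball p \<gamma> a" "Y = pball p \<gamma>' b"
      unfolding pballs_def by auto
    then show "X \<inter> Y \<in> insert {} (pballs p)"
    proof cases
      case (2 \<gamma> a \<gamma>' b)
      then show ?thesis
        using nested[of a b \<gamma> \<gamma>'] nested[of b a \<gamma>' \<gamma>] by (cases "\<gamma> \<le> \<gamma>'") (auto simp: Int_commute)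
    qed auto
  qed
qed

definition pulls_back_balls :: "nat \<Rightarrow> int \<Rightarrow> ((nat \<Rightarrow> rat) \<Rightarrow> (nat \<Rightarrow> rat)) \<Rightarrow> bool" where
  "pulls_back_balls p \<delta> T \<longleftrightarrow> (\<forall>x\<in>padic p. T x \<in> padic p) \<and>
    (\<forall>\<gamma>. \<forall>b\<in>padic p. \<exists>b'\<in>padic p. T -` pball p \<gamma> b \<inter> padic p = pball p (\<gamma> + \<delta>) b')"

lemma pulls_back_ballsI:
  assumes "\<And>x. x \<in> padic p \<Longrightarrow> T x \<in> padic p"
    and "\<And>\<gamma> b. b \<in> padic p \<Longrightarrow> \<exists>b'\<in>padic p. \<forall>x\<in>padic p. T x \<in> pball p \<gamma> b \<longleftrightarrow> x \<in> pball p (\<gamma> + \<delta>) b'"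
  shows "pulls_back_balls p \<delta> T"
  unfolding pulls_back_balls_def
proof (intro conjI ballI allI)
  fix \<gamma> b assume "b \<in> padic p"
  then obtain b' where "b' \<in> padic p" "\<forall>x\<in>padic p. T x \<in> pball p \<gamma> b \<longleftrightarrow> x \<in> pball p (\<gamma> + \<delta>) b'"
    using assms(2) by blast
  moreover from this(2) have "T -` pball p \<gamma> b \<inter> padic p = pball p (\<gamma> + \<delta>) b'"
    by (auto dest: pball_subset[THEN subsetD])
  ultimately show "\<exists>b'\<in>padic p. T -` pball p \<gamma> b \<inter> padic p = pball p (\<gamma> + \<delta>) b'" by blast
qed (use assms(1) in blast)

lemma measurable_pulls_back_balls:
  assumes T: "pulls_back_balls p \<delta> T"
  shows "T \<in> haar p \<rightarrow>\<^sub>M haar p"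
proof (rule measurable_sigma_sets[OF sets_haar pballs_Pow])
  show "T \<in> space (haar p) \<rightarrow> padic p" using T by (auto simp: space_haar pulls_back_balls_def)
  fix Y assume "Y \<in> pballs p"
  then obtain \<gamma> b where "b \<in> padic p" "Y = pball p \<gamma> b" unfolding pballs_def by auto
  then obtain b' where "b' \<in> padic p" "T -` Y \<inter> padic p = pball p (\<gamma> + \<delta>) b'"
    using T unfolding pulls_back_balls_def by blast
  then show "T -` Y \<inter> space (haar p) \<in> sets (haar p)"
    by (simp add: space_haar pball_sets_haar)
qed

lemma emeasure_distr_haar_pball:
  assumes E: "haar_exists p" and T: "pulls_back_balls p \<delta> T" and b: "b \<in> padic p"
  shows "emeasure (distr (haar p) (haar p) T) (pball p \<gamma> b)
    = ennreal (real p powr real_of_int \<delta>) * ennreal (real p powr real_of_int \<gamma>)"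
proof -
  obtain b' where b': "b' \<in> padic p" "T -` pball p \<gamma> b \<inter> padic p = pball p (\<gamma> + \<delta>) b'"
    using T b unfolding pulls_back_balls_def by blast
  have "emeasure (distr (haar p) (haar p) T) (pball p \<gamma> b) = emeasure (haar p) (pball p (\<gamma> + \<delta>) b')"
    using b' measurable_pulls_back_balls[OF T]
    by (subst emeasure_distr[OF _ pball_sets_haar[OF b]]) (simp_all add: space_haar)
  also have "\<dots> = ennreal (real p powr real_of_int \<delta>) * ennreal (real p powr real_of_int \<gamma>)"
    using emeasure_haar_pball[OF E b'(1)] by (simp add: powr_add ennreal_mult' mult.commute)
  finally show ?thesis .
qed

lemma sigma_sets_insert_empty_pballs:
  "sigma_sets (padic p) (insert {} (pballs p)) = sets (haar p)"
  unfolding sets_haar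
proof
  show "sigma_sets (padic p) (insert {} (pballs p)) \<subseteq> sigma_sets (padic p) (pballs p)"
    by (rule sigma_sets_mono) (auto intro: sigma_sets.Empty sigma_sets.Basic)
next
  show "sigma_sets (padic p) (pballs p) \<subseteq> sigma_sets (padic p) (insert {} (pballs p))"
    by (rule sigma_sets_mono') auto
qed

text \<open>Two measures agreeing on the \<open>\<inter>\<close>-stable generator of balls are equal, since \<open>\<rat>\<^sub>p\<close>
  is exhausted by the balls \<open>B\<^sub>n(0)\<close> of finite measure.\<close>

lemma distr_haar_pulls_back_balls:
  assumes p: "p \<ge> 2" and E: "haar_exists p" and T: "pulls_back_balls p \<delta> T"
  shows "distr (haar p) (haar p) T = scale_measure (ennreal (real p powr real_of_int \<delta>)) (haar p)"
proof (rule measure_eqI_generator_eq[OF Int_stable_pballs[OF p], of "padic p" _ _ "\<lambda>n. pball p (int n) pzero"])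
  show "insert {} (pballs p) \<subseteq> Pow (padic p)" using pballs_Pow by auto
  show "sets (distr (haar p) (haar p) T) = sigma_sets (padic p) (insert {} (pballs p))"
    "sets (scale_measure (ennreal (real p powr real_of_int \<delta>)) (haar p))
      = sigma_sets (padic p) (insert {} (pballs p))"
    unfolding sigma_sets_insert_empty_pballs by simp_all
  show "range (\<lambda>n. pball p (int n) pzero) \<subseteq> insert {} (pballs p)"
    unfolding pballs_def using pzero_padic[OF p] by auto
  show "(\<Union>n. pball p (int n) pzero) = padic p" by (rule padic_eq_Union_pball0[OF p])
  show "emeasure (distr (haar p) (haar p) T) (pball p (int n) pzero) \<noteq> \<infinity>" for n
    using emeasure_distr_haar_pball[OF E T pzero_padic[OF p]] by (simp add: ennreal_mult_eq_top_iff)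
  fix X assume "X \<in> insert {} (pballs p)"
  then consider "X = {}" | \<gamma> b where "b \<in> padic p" "X = pball p \<gamma> b"
    unfolding pballs_def by auto
  then show "emeasure (distr (haar p) (haar p) T) X
      = emeasure (scale_measure (ennreal (real p powr real_of_int \<delta>)) (haar p)) X"
  proof cases
    case (2 \<gamma> b)
    then show ?thesis using emeasure_distr_haar_pball[OF E T] emeasure_haar_pball[OF E] by simp
  qed simp
qed

lemma AE_scale_measure: "AE x in M. P x \<Longrightarrow> AE x in scale_measure r M. P x"
  by (auto simp: eventually_ae_filter null_sets_def space_scale_measure)

lemma AE_haar_pulls_back_balls:
  assumes p: "p \<ge> 2" and T: "pulls_back_balls p \<delta> T" and ae: "AE x in haar p. P x"
  shows "AE x in haar p. P (T x)"
proof (cases "haar_exists p")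
  case True
  then show ?thesis
    using measurable_pulls_back_balls[OF T] distr_haar_pulls_back_balls[OF p True T]
      AE_scale_measure[OF ae] AE_distrD
    by metis
qed (rule AE_haar_trivial)

lemma pulls_back_balls_psub:
  assumes p: "p \<ge> 2" and a: "a \<in> padic p"
  shows "pulls_back_balls p 0 (\<lambda>x. psub p x a)"
  by (rule pulls_back_ballsI)
    (use psub_padic[OF p _ a] psub_in_pball_iff[OF p _ a] padd_padic[OF p _ a] in auto)

lemma pulls_back_balls_pdivp: "p \<ge> 2 \<Longrightarrow> pulls_back_balls p (-1) (pdivp p)"
  by (rule pulls_back_ballsI) (use pdivp_padic pdivp_in_pball_iff pmulp_padic in fastforce)+

lemma pulls_back_balls_pmulp: "p \<ge> 2 \<Longrightarrow> pulls_back_balls p 1 (pmulp p)"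
  by (rule pulls_back_ballsI) (use pmulp_padic pmulp_in_pball_iff pdivp_padic in fastforce)+

section \<open>Finite spans in a seminormed function space\<close>

lemma Cauchy_of_dist_le_inverse_Suc:
  fixes t :: "nat \<Rightarrow> 'a::real_normed_vector"
  assumes d: "d > 0" and close: "\<And>m n. norm (t m - t n) * d \<le> 1 / Suc m + 1 / Suc n"
  shows "Cauchy t"
proof (rule CauchyI)
  fix e :: real assume e: "e > 0"
  obtain M :: nat where M: "2 / (d * e) < M" using reals_Archimedean2 by blast
  then have Mpos: "M > 0" using d e by (metis divide_pos_pos less_trans mult_pos_pos of_nat_0_less_iff zero_less_numeral)
  have "norm (t m - t n) < e" if "M \<le> m" "M \<le> n" for m n
  proof -
    have "1 / real (Suc m) \<le> 1 / M" "1 / real (Suc n) \<le> 1 / M"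
      using that Mpos by (simp_all add: frac_le)
    then have "norm (t m - t n) * d \<le> 2 / M" using close[of m n] by simp
    also have "2 / M < d * e" using M d e Mpos by (simp add: field_simps)
    finally show ?thesis using d by (simp add: mult.commute)
  qed
  then show "\<exists>M. \<forall>m\<ge>M. \<forall>n\<ge>M. norm (t m - t n) < e" by blast
qed

locale function_seminorm =
  fixes L :: "('a \<Rightarrow> complex) set" and nrm :: "('a \<Rightarrow> complex) \<Rightarrow> real"
  assumes add_mem: "\<And>f g. f \<in> L \<Longrightarrow> g \<in> L \<Longrightarrow> (\<lambda>x. f x + g x) \<in> L"
    and scale_mem: "\<And>c f. f \<in> L \<Longrightarrow> (\<lambda>x. c * f x) \<in> L"
    and zero_mem: "(\<lambda>x. 0) \<in> L"
    and nrm_triangle: "\<And>f g. f \<in> L \<Longrightarrow> g \<in> L \<Longrightarrow> nrm (\<lambda>x. f x + g x) \<le> nrm f + nrm g"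
    and nrm_scale: "\<And>c f. f \<in> L \<Longrightarrow> nrm (\<lambda>x. c * f x) = cmod c * nrm f"
    and nrm_nonneg: "\<And>f. nrm f \<ge> 0"
begin

lemma diff_mem: "f \<in> L \<Longrightarrow> g \<in> L \<Longrightarrow> (\<lambda>x. f x - g x) \<in> L"
  using add_mem[of f "\<lambda>x. (-1) * g x"] scale_mem[of g "-1"] by simp

lemma nrm_diff_le: "f \<in> L \<Longrightarrow> g \<in> L \<Longrightarrow> nrm (\<lambda>x. f x - g x) \<le> nrm f + nrm g"
  using nrm_triangle[of f "\<lambda>x. (-1) * g x"] scale_mem[of g "-1"] nrm_scale[of g "-1"] by simp

lemma lincomb_mem:
  "finite K \<Longrightarrow> (\<And>k. k \<in> K \<Longrightarrow> \<psi> k \<in> L) \<Longrightarrow> (\<lambda>x. \<Sum>k\<in>K. c k * \<psi> k x) \<in> L"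
proof (induction K rule: finite_induct)
  case (insert j K)
  then have "(\<lambda>x. c j * \<psi> j x + (\<Sum>k\<in>K. c k * \<psi> k x)) \<in> L"
    using add_mem scale_mem by simp
  then show ?case using insert(1,2) by simp
qed (simp add: zero_mem)

definition approx_by_span :: "('b \<Rightarrow> 'a \<Rightarrow> complex) \<Rightarrow> 'b set \<Rightarrow> ('a \<Rightarrow> complex) \<Rightarrow> bool" where
  "approx_by_span \<psi> K f \<longleftrightarrow> (\<forall>e>0. \<exists>c. nrm (\<lambda>x. f x - (\<Sum>k\<in>K. c k * \<psi> k x)) < e)"

lemma approx_by_span_insert_dependent:
  assumes K: "finite K" "j \<notin> K" and \<psi>: "\<And>k. k \<in> insert j K \<Longrightarrow> \<psi> k \<in> L" and f: "f \<in> L"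
    and dep: "nrm (\<lambda>x. \<psi> j x - (\<Sum>k\<in>K. c0 k * \<psi> k x)) = 0"
    and approx: "approx_by_span \<psi> (insert j K) f"
  shows "approx_by_span \<psi> K f"
  unfolding approx_by_span_def
proof (intro allI impI)
  fix e :: real assume "e > 0"
  then obtain c where c: "nrm (\<lambda>x. f x - (\<Sum>k\<in>insert j K. c k * \<psi> k x)) < e"
    using approx unfolding approx_by_span_def by blast
  let ?g = "\<lambda>x. f x - (\<Sum>k\<in>insert j K. c k * \<psi> k x)"
  let ?h = "\<lambda>x. \<psi> j x - (\<Sum>k\<in>K. c0 k * \<psi> k x)"
  have "(\<lambda>x. \<Sum>k\<in>insert j K. c k * \<psi> k x) \<in> L" "(\<lambda>x. \<Sum>k\<in>K. c0 k * \<psi> k x) \<in> L"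
    using K(1) \<psi> by (auto intro!: lincomb_mem)
  then have gL: "?g \<in> L" and hL: "?h \<in> L"
    using diff_mem f \<psi> by auto
  have "(\<lambda>x. f x - (\<Sum>k\<in>K. (c k + c j * c0 k) * \<psi> k x)) = (\<lambda>x. ?g x + c j * ?h x)"
    using K by (simp add: sum.distrib sum_distrib_left algebra_simps)
  moreover have "nrm (\<lambda>x. ?g x + c j * ?h x) \<le> nrm ?g + nrm (\<lambda>x. c j * ?h x)"
    by (rule nrm_triangle[OF gL scale_mem[OF hL]])
  moreover have "nrm (\<lambda>x. c j * ?h x) = 0" using nrm_scale[OF hL] dep by simp
  ultimately have "nrm (\<lambda>x. f x - (\<Sum>k\<in>K. (c k + c j * c0 k) * \<psi> k x)) < e"
    using c by simp
  then show "\<exists>c. nrm (\<lambda>x. f x - (\<Sum>k\<in>K. c k * \<psi> k x)) < e"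
    by (intro exI[of _ "\<lambda>k. c k + c j * c0 k"])
qed

lemma coeff_bound_of_distance:
  assumes K: "finite K" and \<psi>: "\<And>k. k \<in> insert j K \<Longrightarrow> \<psi> k \<in> L"
    and dist: "\<And>c. d \<le> nrm (\<lambda>x. \<psi> j x - (\<Sum>k\<in>K. c k * \<psi> k x))"
  shows "cmod t * d \<le> nrm (\<lambda>x. t * \<psi> j x + (\<Sum>k\<in>K. c k * \<psi> k x))"
proof (cases "t = 0")
  case True
  then show ?thesis using nrm_nonneg by simp
next
  case False
  let ?h = "\<lambda>x. \<psi> j x - (\<Sum>k\<in>K. (- c k / t) * \<psi> k x)"
  have "(\<lambda>x. t * \<psi> j x + (\<Sum>k\<in>K. c k * \<psi> k x)) = (\<lambda>x. t * ?h x)"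
    using False by (simp add: sum_distrib_left sum_negf algebra_simps)
  moreover have "(\<lambda>x. \<Sum>k\<in>K. (- c k / t) * \<psi> k x) \<in> L"
    using K \<psi> by (intro lincomb_mem) auto
  then have "?h \<in> L" using diff_mem \<psi> by auto
  ultimately show ?thesis using dist[of "\<lambda>k. - c k / t"] nrm_scale
    by (simp add: mult_left_mono)
qed

lemma approx_by_span_of_coeff_limit:
  assumes K: "finite K" "j \<notin> K" and \<psi>: "\<And>k. k \<in> insert j K \<Longrightarrow> \<psi> k \<in> L" and f: "f \<in> L"
    and approx: "(\<lambda>n. nrm (\<lambda>x. f x - (\<Sum>k\<in>insert j K. C n k * \<psi> k x))) \<longlonglongrightarrow> 0"
    and \<tau>: "(\<lambda>n. C n j) \<longlonglongrightarrow> \<tau>"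
  shows "approx_by_span \<psi> K (\<lambda>x. f x - \<tau> * \<psi> j x)"
  unfolding approx_by_span_def
proof (intro allI impI)
  define g where "g n = (\<lambda>x. f x - (\<Sum>k\<in>insert j K. C n k * \<psi> k x))" for n
  have gL: "g n \<in> L" for n unfolding g_def using diff_mem[OF f lincomb_mem] K \<psi> by blast
  have "(\<lambda>n. nrm (g n) + cmod (C n j - \<tau>) * nrm (\<psi> j)) \<longlonglongrightarrow> 0 + cmod (\<tau> - \<tau>) * nrm (\<psi> j)"
    using approx unfolding g_def by (intro tendsto_intros \<tau>)
  then have bound: "(\<lambda>n. nrm (g n) + cmod (C n j - \<tau>) * nrm (\<psi> j)) \<longlonglongrightarrow> 0" by simp
  fix e :: real assume "e > 0"
  then have "\<forall>\<^sub>F n in sequentially. nrm (g n) + cmod (C n j - \<tau>) * nrm (\<psi> j) < e"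
    by (rule order_tendstoD(2)[OF bound])
  then obtain n where n: "nrm (g n) + cmod (C n j - \<tau>) * nrm (\<psi> j) < e"
    by (auto simp: eventually_sequentially)
  have "(\<lambda>x. f x - \<tau> * \<psi> j x - (\<Sum>k\<in>K. C n k * \<psi> k x)) = (\<lambda>x. g n x + (C n j - \<tau>) * \<psi> j x)"
    using K unfolding g_def by (simp add: algebra_simps)
  moreover have "\<psi> j \<in> L" using \<psi> by simp
  ultimately have "nrm (\<lambda>x. f x - \<tau> * \<psi> j x - (\<Sum>k\<in>K. C n k * \<psi> k x))
      \<le> nrm (g n) + cmod (C n j - \<tau>) * nrm (\<psi> j)"
    using nrm_triangle[OF gL scale_mem] nrm_scale by simp
  with n show "\<exists>c. nrm (\<lambda>x. f x - \<tau> * \<psi> j x - (\<Sum>k\<in>K. c k * \<psi> k x)) < e"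
    by (intro exI[of _ "C n"]) simp
qed

text \<open>If \<open>\<psi> j\<close> stays away from the span of the other \<open>\<psi> k\<close>, the \<open>j\<close>-th coefficients of
  a sequence of approximants of \<open>f\<close> converge, so their limit can be moved into \<open>f\<close>.\<close>

lemma approx_by_span_insert_independent:
  assumes K: "finite K" "j \<notin> K" and \<psi>: "\<And>k. k \<in> insert j K \<Longrightarrow> \<psi> k \<in> L" and f: "f \<in> L"
    and d: "d > 0" and dist: "\<And>c. d \<le> nrm (\<lambda>x. \<psi> j x - (\<Sum>k\<in>K. c k * \<psi> k x))"
    and approx: "approx_by_span \<psi> (insert j K) f"
  shows "\<exists>\<tau>. approx_by_span \<psi> K (\<lambda>x. f x - \<tau> * \<psi> j x)"
proof -
  define g where "g C = (\<lambda>x. f x - (\<Sum>k\<in>insert j K. C k * \<psi> k x))" for C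
  have gL: "g C \<in> L" for C unfolding g_def using diff_mem[OF f lincomb_mem] K \<psi> by blast
  have "\<forall>n::nat. \<exists>c. nrm (g c) < 1 / Suc n"
    using approx unfolding approx_by_span_def g_def by simp
  then obtain C where C: "\<And>n::nat. nrm (g (C n)) < 1 / Suc n" by metis
  have lim: "(\<lambda>n. nrm (g (C n))) \<longlonglongrightarrow> 0"
  proof (rule real_tendsto_sandwich[where f = "\<lambda>_. 0"])
    show "\<forall>\<^sub>F n in sequentially. nrm (g (C n)) \<le> 1 / real (Suc n)"
      using C by (simp add: less_imp_le)
    show "(\<lambda>n. 1 / real (Suc n)) \<longlonglongrightarrow> 0" using LIMSEQ_Suc[OF lim_inverse_n'] by simp
  qed (simp_all add: nrm_nonneg)
  have "cmod (C m j - C n j) * d \<le> 1 / Suc m + 1 / Suc n" for m n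
  proof -
    have "(\<lambda>x. g (C n) x - g (C m) x)
        = (\<lambda>x. (C m j - C n j) * \<psi> j x + (\<Sum>k\<in>K. (C m k - C n k) * \<psi> k x))"
      using K unfolding g_def by (simp add: sum_subtractf algebra_simps)
    then have "cmod (C m j - C n j) * d \<le> nrm (\<lambda>x. g (C n) x - g (C m) x)"
      using coeff_bound_of_distance[OF K(1) \<psi> dist] by simp
    also have "\<dots> \<le> 1 / Suc m + 1 / Suc n"
      using nrm_diff_le[OF gL gL, of "C n" "C m"] C[of n] C[of m] by simp
    finally show ?thesis .
  qed
  then have "Cauchy (\<lambda>n. C n j)" by (rule Cauchy_of_dist_le_inverse_Suc[OF d])
  then obtain \<tau> where \<tau>: "(\<lambda>n. C n j) \<longlonglongrightarrow> \<tau>" using Cauchy_convergent convergent_def by blast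
  show ?thesis
    using approx_by_span_of_coeff_limit[of K j \<psi> f C \<tau>] K \<psi> f lim \<tau> unfolding g_def by blast
qed

text \<open>The span of finitely many elements is closed: an element that can be approximated
  by combinations of them is one of them, up to seminorm zero.\<close>

lemma approx_by_span_imp_lincomb:
  assumes "finite K" "\<And>k. k \<in> K \<Longrightarrow> \<psi> k \<in> L" "f \<in> L" "approx_by_span \<psi> K f"
  shows "\<exists>c. nrm (\<lambda>x. f x - (\<Sum>k\<in>K. c k * \<psi> k x)) = 0"
  using assms
proof (induction K arbitrary: f rule: finite_induct)
  case empty
  then have "\<forall>e>0. nrm f < e" unfolding approx_by_span_def by simp
  then have "\<not> nrm f > 0" by (auto dest: spec[of _ "nrm f"])
  then have "nrm f = 0" using nrm_nonneg[of f] by simp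
  then show ?case by simp
next
  case (insert j K)
  have \<psi>K: "\<And>k. k \<in> K \<Longrightarrow> \<psi> k \<in> L" using insert.prems(1) by blast
  have \<psi>j: "\<psi> j \<in> L" using insert.prems(1) by blast
  show ?case
  proof (cases "approx_by_span \<psi> K (\<psi> j)")
    case True
    then obtain c0 where dep: "nrm (\<lambda>x. \<psi> j x - (\<Sum>k\<in>K. c0 k * \<psi> k x)) = 0"
      using insert.IH[OF \<psi>K \<psi>j] by blast
    have "approx_by_span \<psi> K f"
      by (rule approx_by_span_insert_dependent[OF insert.hyps(1,2) insert.prems(1,2) dep insert.prems(3)])
    then obtain c where c: "nrm (\<lambda>x. f x - (\<Sum>k\<in>K. c k * \<psi> k x)) = 0"
      using insert.IH[OF \<psi>K insert.prems(2)] by blast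
    have "(\<Sum>k\<in>insert j K. (c(j := 0)) k * \<psi> k x) = (\<Sum>k\<in>K. c k * \<psi> k x)" for x
      using insert.hyps by (auto intro!: sum.cong)
    then show ?thesis using c by (intro exI[of _ "c(j := 0)"]) presburger
  next
    case False
    then obtain d where d: "d > 0" "\<And>c. d \<le> nrm (\<lambda>x. \<psi> j x - (\<Sum>k\<in>K. c k * \<psi> k x))"
      unfolding approx_by_span_def by (auto simp: not_less)
    then obtain \<tau> where \<tau>: "approx_by_span \<psi> K (\<lambda>x. f x - \<tau> * \<psi> j x)"
      using approx_by_span_insert_independent[OF insert.hyps(1,2) insert.prems(1,2) d insert.prems(3)]
      by blast
    then obtain c where c: "nrm (\<lambda>x. f x - \<tau> * \<psi> j x - (\<Sum>k\<in>K. c k * \<psi> k x)) = 0"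
      using insert.IH[OF \<psi>K diff_mem[OF insert.prems(2) scale_mem[OF \<psi>j]]] by blast
    have "(\<Sum>k\<in>insert j K. (c(j := \<tau>)) k * \<psi> k x) = \<tau> * \<psi> j x + (\<Sum>k\<in>K. c k * \<psi> k x)" for x
      using insert.hyps by (auto intro!: sum.cong)
    then show ?thesis using c by (intro exI[of _ "c(j := \<tau>)"]) (simp add: diff_diff_eq)
  qed
qed

end

section \<open>Square-integrable functions\<close>

text \<open>Cauchy-Schwarz, obtained by optimising the weighted AM-GM bound \<open>2C \<le> tA + B/t\<close>
  over \<open>t > 0\<close>.\<close>

lemma le_sqrt_mult_sqrt_of_AM_GM_bounds:
  fixes A B C :: real
  assumes A: "A \<ge> 0" and B: "B \<ge> 0" and bound: "\<And>t. t > 0 \<Longrightarrow> 2 * C \<le> t * A + B / t"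
  shows "C \<le> sqrt A * sqrt B"
proof (rule ccontr)
  assume c: "\<not> C \<le> sqrt A * sqrt B"
  then have C: "C > 0" using A B by (smt (verit) real_sqrt_ge_zero mult_nonneg_nonneg)
  consider "A = 0" | "A > 0" "B = 0" | "A > 0" "B > 0" using A B by linarith
  then show False
  proof cases
    case 1
    have "2 * C \<le> B / ((B + 1) / C)" using bound[of "(B + 1) / C"] 1 C B by simp
    also have "\<dots> < C" using C B by (simp add: field_simps)
    finally show False using C by simp
  next
    case 2
    have "2 * C \<le> C / (A + 1) * A" using bound[of "C / (A + 1)"] 2 C by simp
    also have "\<dots> < C" using C A by (simp add: field_simps)
    finally show False using C by simp
  next
    case 3
    then have "2 * C \<le> sqrt B / sqrt A * A + B / (sqrt B / sqrt A)"
      using bound[of "sqrt B / sqrt A"] by simp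
    also have "\<dots> = 2 * (sqrt A * sqrt B)"
      using 3 by (simp add: field_simps real_sqrt_mult[symmetric])
    finally show False using c by simp
  qed
qed

definition L2_space :: "'a measure \<Rightarrow> ('a \<Rightarrow> complex) set" where
  "L2_space M = {f. f \<in> borel_measurable M \<and> integrable M (\<lambda>x. (cmod (f x))\<^sup>2)}"

definition L2_norm :: "'a measure \<Rightarrow> ('a \<Rightarrow> complex) \<Rightarrow> real" where
  "L2_norm M f = sqrt (\<integral>x. (cmod (f x))\<^sup>2 \<partial>M)"

lemma integrable_norm_mult_L2:
  assumes f: "f \<in> L2_space M" and g: "g \<in> L2_space M"
  shows "integrable M (\<lambda>x. cmod (f x) * cmod (g x))"
proof (rule Bochner_Integration.integrable_bound)
  show "integrable M (\<lambda>x. (cmod (f x))\<^sup>2 + (cmod (g x))\<^sup>2)"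
    using f g unfolding L2_space_def by auto
  show "(\<lambda>x. cmod (f x) * cmod (g x)) \<in> borel_measurable M"
    using f g unfolding L2_space_def by auto
  have "cmod (f x) * cmod (g x) \<le> (cmod (f x))\<^sup>2 + (cmod (g x))\<^sup>2" for x
    by (smt (verit) norm_ge_zero power2_eq_square mult_mono sum_squares_ge_zero zero_le_power2
        power2_diff mult_nonneg_nonneg)
  then show "AE x in M. norm (cmod (f x) * cmod (g x)) \<le> norm ((cmod (f x))\<^sup>2 + (cmod (g x))\<^sup>2)"
    by simp
qed

lemma norm_add_power2_le:
  "(cmod (a + b))\<^sup>2 \<le> (cmod a)\<^sup>2 + 2 * (cmod a * cmod b) + (cmod b)\<^sup>2"
proof -
  have "(cmod (a + b))\<^sup>2 \<le> (cmod a + cmod b)\<^sup>2"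
    by (intro power_mono norm_triangle_ineq) auto
  then show ?thesis by (simp add: power2_sum)
qed

lemma L2_space_add:
  assumes f: "f \<in> L2_space M" and g: "g \<in> L2_space M"
  shows "(\<lambda>x. f x + g x) \<in> L2_space M"
proof -
  have fm: "f \<in> borel_measurable M" and gm: "g \<in> borel_measurable M"
    using f g unfolding L2_space_def by auto
  have "integrable M (\<lambda>x. (cmod (f x))\<^sup>2 + 2 * (cmod (f x) * cmod (g x)) + (cmod (g x))\<^sup>2)"
    using f g integrable_norm_mult_L2[OF f g] unfolding L2_space_def by auto
  then have "integrable M (\<lambda>x. (cmod (f x + g x))\<^sup>2)"
    by (rule Bochner_Integration.integrable_bound)
      (use fm gm norm_add_power2_le in \<open>auto intro!: AE_I2 simp: abs_le_iff\<close>)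
  then show ?thesis using fm gm unfolding L2_space_def by auto
qed

lemma integral_norm_mult_le_L2_norm:
  assumes f: "f \<in> L2_space M" and g: "g \<in> L2_space M"
  shows "(\<integral>x. cmod (f x) * cmod (g x) \<partial>M) \<le> L2_norm M f * L2_norm M g"
  unfolding L2_norm_def
proof (rule le_sqrt_mult_sqrt_of_AM_GM_bounds)
  have fi: "integrable M (\<lambda>x. (cmod (f x))\<^sup>2)" and gi: "integrable M (\<lambda>x. (cmod (g x))\<^sup>2)"
    using f g unfolding L2_space_def by auto
  fix t :: real assume t: "t > 0"
  have "2 * (cmod (f x) * cmod (g x)) \<le> t * (cmod (f x))\<^sup>2 + (cmod (g x))\<^sup>2 / t" for x
  proof -
    have "0 \<le> (t * cmod (f x) - cmod (g x))\<^sup>2" by simp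
    then show ?thesis using t by (simp add: field_simps power2_eq_square algebra_simps)
  qed
  then have "(\<integral>x. 2 * (cmod (f x) * cmod (g x)) \<partial>M) \<le> (\<integral>x. t * (cmod (f x))\<^sup>2 + (cmod (g x))\<^sup>2 / t \<partial>M)"
    using integrable_norm_mult_L2[OF f g] fi gi by (intro integral_mono) auto
  then show "2 * (\<integral>x. cmod (f x) * cmod (g x) \<partial>M)
      \<le> t * (\<integral>x. (cmod (f x))\<^sup>2 \<partial>M) + (\<integral>x. (cmod (g x))\<^sup>2 \<partial>M) / t"
    using integrable_norm_mult_L2[OF f g] fi gi by simp
qed auto

lemma L2_norm_triangle:
  assumes f: "f \<in> L2_space M" and g: "g \<in> L2_space M"
  shows "L2_norm M (\<lambda>x. f x + g x) \<le> L2_norm M f + L2_norm M g"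
proof -
  have fi: "integrable M (\<lambda>x. (cmod (f x))\<^sup>2)" and gi: "integrable M (\<lambda>x. (cmod (g x))\<^sup>2)"
    and fgi: "integrable M (\<lambda>x. (cmod (f x + g x))\<^sup>2)"
    using f g L2_space_add[OF f g] unfolding L2_space_def by auto
  have "(\<integral>x. (cmod (f x + g x))\<^sup>2 \<partial>M)
      \<le> (\<integral>x. (cmod (f x))\<^sup>2 + 2 * (cmod (f x) * cmod (g x)) + (cmod (g x))\<^sup>2 \<partial>M)"
    using fi gi fgi integrable_norm_mult_L2[OF f g] norm_add_power2_le by (intro integral_mono) auto
  also have "\<dots> = (L2_norm M f)\<^sup>2 + 2 * (\<integral>x. cmod (f x) * cmod (g x) \<partial>M) + (L2_norm M g)\<^sup>2"
    using fi gi integrable_norm_mult_L2[OF f g] by (simp add: L2_norm_def)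
  also have "\<dots> \<le> (L2_norm M f + L2_norm M g)\<^sup>2"
    using integral_norm_mult_le_L2_norm[OF f g] by (simp add: power2_sum)
  finally have "L2_norm M (\<lambda>x. f x + g x) \<le> sqrt ((L2_norm M f + L2_norm M g)\<^sup>2)"
    unfolding L2_norm_def[of _ "\<lambda>x. f x + g x"] by (rule real_sqrt_le_mono)
  moreover have "0 \<le> L2_norm M f + L2_norm M g" by (simp add: L2_norm_def)
  ultimately show ?thesis by simp
qed

lemma function_seminorm_L2: "function_seminorm (L2_space M) (L2_norm M)"
proof
  fix c :: complex and f assume f: "f \<in> L2_space M"
  have eq: "(\<lambda>x. (cmod (c * f x))\<^sup>2) = (\<lambda>x. (cmod c)\<^sup>2 * (cmod (f x))\<^sup>2)"
    by (simp add: norm_mult power_mult_distrib)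
  show "(\<lambda>x. c * f x) \<in> L2_space M"
    using f by (auto simp: L2_space_def norm_mult power_mult_distrib)
  show "L2_norm M (\<lambda>x. c * f x) = cmod c * L2_norm M f"
    unfolding L2_norm_def eq by (simp add: real_sqrt_mult)
next
  show "(\<lambda>x. 0) \<in> L2_space M" by (simp add: L2_space_def)
qed (use L2_space_add L2_norm_triangle in \<open>auto simp: L2_norm_def\<close>)

lemma AE_eq_0_of_L2_norm_eq_0:
  assumes "f \<in> L2_space M" "L2_norm M f = 0"
  shows "AE x in M. f x = 0"
proof -
  have "(\<integral>x. (cmod (f x))\<^sup>2 \<partial>M) = 0" using assms(2) by (simp add: L2_norm_def)
  then have "AE x in M. (cmod (f x))\<^sup>2 = 0"
    using assms(1) by (subst integral_nonneg_eq_0_iff_AE[symmetric]) (auto simp: L2_space_def)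
  then show ?thesis by eventually_elim simp
qed

section \<open>The refinement equation\<close>

lemma L2_eq_L2_space: "L2 p = L2_space (haar p)"
  unfolding L2_def L2_space_def ..

lemma l2dist_eq_L2_norm: "l2dist p f g = L2_norm (haar p) (\<lambda>x. f x - g x)"
  unfolding l2dist_def L2_norm_def ..

lemma L2_space_haar_translate:
  assumes p: "p \<ge> 2" and E: "haar_exists p" and a: "a \<in> padic p"
    and f: "f \<in> L2_space (haar p)"
  shows "(\<lambda>x. f (psub p x a)) \<in> L2_space (haar p)"
proof -
  have fm: "f \<in> borel_measurable (haar p)" and fi: "integrable (haar p) (\<lambda>x. (cmod (f x))\<^sup>2)"
    using f unfolding L2_space_def by auto
  note T = pulls_back_balls_psub[OF p a]
  have "(\<lambda>x. f (psub p x a)) \<in> borel_measurable (haar p)"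
    using measurable_compose[OF measurable_pulls_back_balls[OF T] fm] by (simp add: o_def)
  moreover have "integrable (haar p) (\<lambda>x. (cmod (f (psub p x a)))\<^sup>2)"
    using integrable_distr_eq[OF measurable_pulls_back_balls[OF T], of "\<lambda>y. (cmod (f y))\<^sup>2"]
      fi fm distr_haar_pulls_back_balls[OF p E T] p
    by simp
  ultimately show ?thesis unfolding L2_space_def by simp
qed

text \<open>If \<open>\<phi>\<close> is supported in \<open>B\<^sub>N(0)\<close>, the translate \<open>\<phi>(x - a)\<close> can be nonzero at a point
  \<open>x \<in> B\<^sub>N\<^sub>+\<^sub>1(0)\<close> only if \<open>a \<in> B\<^sub>N\<^sub>+\<^sub>1(0)\<close>, and vice versa.\<close>

lemma sum_translates_restrict_pball0:
  fixes \<phi> c :: "(nat \<Rightarrow> rat) \<Rightarrow> complex"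
  assumes p: "p \<ge> 2" and x: "x \<in> padic p" and F: "finite F" "F \<subseteq> padic p"
    and vanish: "\<And>a. a \<in> F \<Longrightarrow> psub p x a \<notin> pball p (int N) pzero \<Longrightarrow> \<phi> (psub p x a) = 0"
  shows "x \<in> pball p (int (N + 1)) pzero \<Longrightarrow>
      (\<Sum>a\<in>F. c a * \<phi> (psub p x a)) = (\<Sum>a\<in>F \<inter> pball p (int (N + 1)) pzero. c a * \<phi> (psub p x a))"
    and "x \<notin> pball p (int (N + 1)) pzero \<Longrightarrow>
      (\<Sum>a\<in>F \<inter> pball p (int (N + 1)) pzero. c a * \<phi> (psub p x a)) = 0"
proof -
  have same_side: "x \<in> pball p (int (N + 1)) pzero \<longleftrightarrow> a \<in> pball p (int (N + 1)) pzero"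
    if "a \<in> F" "c a * \<phi> (psub p x a) \<noteq> 0" for a
  proof -
    have a: "a \<in> padic p" using that(1) F(2) by blast
    have "\<phi> (psub p x a) \<noteq> 0" using that(2) by auto
    then have "psub p x a \<in> pball p (int N) pzero" using vanish[OF that(1)] by blast
    then have "x \<in> pball p (int N) a" using psub_in_pball0_iff[OF p x a] by blast
    then show ?thesis by (rule pball0_iff_of_in_pball[OF p _ a]) simp
  qed
  show "x \<in> pball p (int (N + 1)) pzero \<Longrightarrow>
      (\<Sum>a\<in>F. c a * \<phi> (psub p x a)) = (\<Sum>a\<in>F \<inter> pball p (int (N + 1)) pzero. c a * \<phi> (psub p x a))"
    using same_side by (intro sum.mono_neutral_right[OF F(1)]) auto
  show "x \<notin> pball p (int (N + 1)) pzero \<Longrightarrow>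
      (\<Sum>a\<in>F \<inter> pball p (int (N + 1)) pzero. c a * \<phi> (psub p x a)) = 0"
    using same_side by (intro sum.neutral) auto
qed

lemma L2_norm_restrict_translates_le:
  assumes p: "p \<ge> 2" and E: "haar_exists p"
    and f: "f \<in> L2_space (haar p)" and \<phi>: "\<phi> \<in> L2_space (haar p)"
    and F: "finite F" "F \<subseteq> padic p"
    and f_supp: "AE x in haar p. x \<notin> pball p (int (N + 1)) pzero \<longrightarrow> f x = 0"
    and \<phi>_supp: "AE x in haar p. x \<notin> pball p (int N) pzero \<longrightarrow> \<phi> x = 0"
  shows "L2_norm (haar p) (\<lambda>x. f x - (\<Sum>a\<in>F \<inter> pball p (int (N + 1)) pzero. c a * \<phi> (psub p x a)))
    \<le> L2_norm (haar p) (\<lambda>x. f x - (\<Sum>a\<in>F. c a * \<phi> (psub p x a)))"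
proof -
  interpret function_seminorm "L2_space (haar p)" "L2_norm (haar p)" by (rule function_seminorm_L2)
  define B where "B = pball p (int (N + 1)) pzero"
  have in_L2: "(\<lambda>x. f x - (\<Sum>a\<in>G. c a * \<phi> (psub p x a))) \<in> L2_space (haar p)" if "G \<subseteq> F" for G
    using F that L2_space_haar_translate[OF p E _ \<phi>] finite_subset
    by (intro diff_mem[OF f] lincomb_mem) auto
  have vanish: "AE x in haar p. \<forall>a\<in>F. psub p x a \<notin> pball p (int N) pzero \<longrightarrow> \<phi> (psub p x a) = 0"
    using F AE_haar_pulls_back_balls[OF p pulls_back_balls_psub[OF p] \<phi>_supp]
    by (intro AE_finite_allI) auto
  have "AE x in haar p. (cmod (f x - (\<Sum>a\<in>F \<inter> B. c a * \<phi> (psub p x a))))\<^sup>2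
      \<le> (cmod (f x - (\<Sum>a\<in>F. c a * \<phi> (psub p x a))))\<^sup>2"
    using vanish f_supp AE_space
  proof eventually_elim
    case (elim x)
    then have x: "x \<in> padic p" by (simp add: space_haar)
    note restrict = sum_translates_restrict_pball0[OF p x F, of N \<phi> c]
    show ?case using restrict elim(1,2) unfolding B_def by (cases "x \<in> pball p (int (N + 1)) pzero") auto
  qed
  then have "(\<integral>x. (cmod (f x - (\<Sum>a\<in>F \<inter> B. c a * \<phi> (psub p x a))))\<^sup>2 \<partial>haar p)
      \<le> (\<integral>x. (cmod (f x - (\<Sum>a\<in>F. c a * \<phi> (psub p x a))))\<^sup>2 \<partial>haar p)"
    using in_L2[of "F \<inter> B"] in_L2[of F] by (intro integral_mono_AE) (auto simp: L2_space_def)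
  then show ?thesis unfolding L2_norm_def B_def by (rule real_sqrt_le_mono)
qed

lemma sum_Int_pball0_eq_sum_Ip_point:
  assumes p: "p \<ge> 2" and F: "F \<subseteq> Ip p"
  shows "(\<Sum>a\<in>F \<inter> pball p (int n) pzero. g a)
    = (\<Sum>k<p ^ n. if Ip_point p n k \<in> F then g (Ip_point p n k) else 0)"
proof -
  have "F \<inter> pball p (int n) pzero = F \<inter> (Ip p \<inter> pball p (int n) pzero)" using F by blast
  also have "\<dots> = Ip_point p n ` {k \<in> {..<p ^ n}. Ip_point p n k \<in> F}"
    unfolding Ip_Int_pball0[OF p] by blast
  moreover have "inj_on (Ip_point p n) {k \<in> {..<p ^ n}. Ip_point p n k \<in> F}"
    by (rule inj_on_subset[OF inj_on_Ip_point[OF p]]) auto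
  ultimately have "(\<Sum>a\<in>F \<inter> pball p (int n) pzero. g a)
      = (\<Sum>k\<in>{k \<in> {..<p ^ n}. Ip_point p n k \<in> F}. g (Ip_point p n k))"
    by (simp add: sum.reindex)
  also have "\<dots> = (\<Sum>k<p ^ n. if Ip_point p n k \<in> F then g (Ip_point p n k) else 0)"
    by (rule sum.inter_filter) simp
  finally show ?thesis .
qed

lemma L2_norm_lincomb_Ip_point_translates_le:
  assumes p: "p \<ge> 2" and E: "haar_exists p"
    and f: "f \<in> L2_space (haar p)" and \<phi>: "\<phi> \<in> L2_space (haar p)"
    and F: "finite F" "F \<subseteq> padic p" "F \<subseteq> Ip p"
    and f_supp: "AE x in haar p. x \<notin> pball p (int (N + 1)) pzero \<longrightarrow> f x = 0"
    and \<phi>_supp: "AE x in haar p. x \<notin> pball p (int N) pzero \<longrightarrow> \<phi> x = 0"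
  shows "\<exists>c'. L2_norm (haar p) (\<lambda>x. f x - (\<Sum>k<p ^ (N + 1). c' k * \<phi> (psub p x (Ip_point p (N + 1) k))))
    \<le> L2_norm (haar p) (\<lambda>x. f x - (\<Sum>a\<in>F. c a * \<phi> (psub p x a)))"
proof
  define c' where "c' k = (if Ip_point p (N + 1) k \<in> F then c (Ip_point p (N + 1) k) else 0)" for k
  have "(\<Sum>a\<in>F \<inter> pball p (int (N + 1)) pzero. c a * \<phi> (psub p x a))
      = (\<Sum>k<p ^ (N + 1). c' k * \<phi> (psub p x (Ip_point p (N + 1) k)))" for x
    unfolding sum_Int_pball0_eq_sum_Ip_point[OF p F(3)] c'_def by (rule sum.cong) auto
  then show "L2_norm (haar p) (\<lambda>x. f x - (\<Sum>k<p ^ (N + 1). c' k * \<phi> (psub p x (Ip_point p (N + 1) k))))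
      \<le> L2_norm (haar p) (\<lambda>x. f x - (\<Sum>a\<in>F. c a * \<phi> (psub p x a)))"
    using L2_norm_restrict_translates_le[OF p E f \<phi> F(1,2) f_supp \<phi>_supp, of c] by simp
qed

lemma MRA_subset_L2_space:
  assumes "MRA p V"
  shows "V j \<subseteq> L2_space (haar p)"
proof -
  have "closed_subspace p (V j)" using assms unfolding MRA_def by blast
  then show ?thesis unfolding closed_subspace_def L2_eq_L2_space by blast
qed

lemma scaling_function_dilate_in_V0:
  assumes p: "p \<ge> 2" and MRA: "MRA p V" and sf: "scaling_function p V \<phi>"
  shows "(\<lambda>x. \<phi> (pmulp p x)) \<in> V 0"
proof -
  have closed: "L2closure p (V 1) \<subseteq> V 1" and V_L2: "V 1 \<subseteq> L2 p"
    using MRA unfolding MRA_def closed_subspace_def by auto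
  have "\<phi> \<in> V 1" using sf MRA unfolding scaling_function_def MRA_def by force
  define g where "g x = \<phi> (pmulp p (pdivp p x))" for x
  have g: "g x = \<phi> x" if "x \<in> space (haar p)" for x
    using that pmulp_pdivp[OF p] unfolding g_def space_haar by simp
  have "g \<in> L2 p"
    using \<open>\<phi> \<in> V 1\<close> V_L2 g unfolding L2_def
    by (auto cong: measurable_cong Bochner_Integration.integrable_cong)
  moreover have "l2dist p g \<phi> = 0"
    unfolding l2dist_def using g by (simp cong: Bochner_Integration.integral_cong)
  ultimately have "g \<in> L2closure p (V 1)"
    using \<open>\<phi> \<in> V 1\<close> unfolding L2closure_def by force
  then have "g \<in> V 1" using closed by blast
  then show ?thesis using MRA unfolding MRA_def g_def by force
qed

lemma dilate_vanishes_outside_pball0: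
  assumes p: "p \<ge> 2" and supp: "AE x in haar p. x \<notin> pball p (int N) pzero \<longrightarrow> \<phi> x = 0"
  shows "AE x in haar p. x \<notin> pball p (int (N + 1)) pzero \<longrightarrow> \<phi> (pmulp p x) = 0"
  using AE_haar_pulls_back_balls[OF p pulls_back_balls_pmulp[OF p] supp] AE_space
proof eventually_elim
  case (elim x)
  have "pdivp p pzero = pzero" by (simp add: pdivp_def pzero_def)
  then have "pmulp p x \<in> pball p (int N) pzero \<longleftrightarrow> x \<in> pball p (int (N + 1)) pzero"
    using pmulp_in_pball_iff[OF p _ pzero_padic[OF p], of x "int N"] elim(2)
    by (simp add: space_haar add.commute)
  then show ?case using elim(1) by blast
qed

lemma dilate_scaling_eq_lincomb_translates:
  assumes p: "p \<ge> 2" and E: "haar_exists p" and MRA: "MRA p V"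
    and sf: "scaling_function p V \<phi>"
    and supp: "AE x in haar p. x \<notin> pball p (int N) pzero \<longrightarrow> \<phi> x = 0"
  shows "\<exists>c. AE x in haar p.
    \<phi> (pmulp p x) = (\<Sum>k<p ^ (N + 1). c k * \<phi> (psub p x (Ip_point p (N + 1) k)))"
proof -
  interpret function_seminorm "L2_space (haar p)" "L2_norm (haar p)" by (rule function_seminorm_L2)
  define f where "f x = \<phi> (pmulp p x)" for x
  define \<psi> where "\<psi> k x = \<phi> (psub p x (Ip_point p (N + 1) k))" for k x
  have V0: "V 0 = L2closure p (trans_span p \<phi>)" and "\<phi> \<in> V 0"
    using sf unfolding scaling_function_def by auto
  with MRA_subset_L2_space[OF MRA] have \<phi>: "\<phi> \<in> L2_space (haar p)" by blast
  have fV0: "f \<in> V 0" unfolding f_def by (rule scaling_function_dilate_in_V0[OF p MRA sf])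
  then have f: "f \<in> L2_space (haar p)" using MRA_subset_L2_space[OF MRA] by blast
  have \<psi>: "\<psi> k \<in> L2_space (haar p)" for k
    unfolding \<psi>_def by (rule L2_space_haar_translate[OF p E Ip_point_padic[OF p] \<phi>])
  have f_supp: "AE x in haar p. x \<notin> pball p (int (N + 1)) pzero \<longrightarrow> f x = 0"
    unfolding f_def by (rule dilate_vanishes_outside_pball0[OF p supp])
  have approx: "approx_by_span \<psi> {..<p ^ (N + 1)} f"
    unfolding approx_by_span_def
  proof (intro allI impI)
    fix e :: real assume "e > 0"
    then obtain s where "s \<in> trans_span p \<phi>" and close: "L2_norm (haar p) (\<lambda>x. f x - s x) < e"
      using fV0 unfolding V0 L2closure_def l2dist_eq_L2_norm by blast
    then obtain F c where s: "s = (\<lambda>x. \<Sum>a\<in>F. c a * \<phi> (psub p x a))" and F: "finite F" "F \<subseteq> Ip p"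
      unfolding trans_span_def by blast
    have "F \<subseteq> padic p" using F(2) unfolding Ip_def by blast
    then obtain c' where "L2_norm (haar p) (\<lambda>x. f x - (\<Sum>k<p ^ (N + 1). c' k * \<psi> k x))
        \<le> L2_norm (haar p) (\<lambda>x. f x - (\<Sum>a\<in>F. c a * \<phi> (psub p x a)))"
      using L2_norm_lincomb_Ip_point_translates_le[OF p E f \<phi> F(1) _ F(2) f_supp supp]
      unfolding \<psi>_def by blast
    with close s have "L2_norm (haar p) (\<lambda>x. f x - (\<Sum>k<p ^ (N + 1). c' k * \<psi> k x)) < e"
      by simp
    then show "\<exists>c. L2_norm (haar p) (\<lambda>x. f x - (\<Sum>k<p ^ (N + 1). c k * \<psi> k x)) < e" by blast
  qed
  obtain c where c: "L2_norm (haar p) (\<lambda>x. f x - (\<Sum>k<p ^ (N + 1). c k * \<psi> k x)) = 0"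
    using approx_by_span_imp_lincomb[OF finite_lessThan \<psi> f approx] by blast
  have "(\<lambda>x. \<Sum>k<p ^ (N + 1). c k * \<psi> k x) \<in> L2_space (haar p)"
    by (rule lincomb_mem[OF finite_lessThan \<psi>])
  then have "AE x in haar p. f x - (\<Sum>k<p ^ (N + 1). c k * \<psi> k x) = 0"
    using AE_eq_0_of_L2_norm_eq_0[OF diff_mem[OF f] c] by blast
  then show ?thesis unfolding f_def \<psi>_def by (auto elim!: eventually_mono)
qed

lemma scaling_function_refinement_equation:
  assumes p: "p \<ge> 2" and MRA: "MRA p V" and sf: "scaling_function p V \<phi>"
    and supp: "AE x in haar p. x \<notin> pball p (int N) pzero \<longrightarrow> \<phi> x = 0"
  shows "\<exists>c. AE x in haar p.
    \<phi> x = (\<Sum>k<p ^ (N + 1). c k * \<phi> (psub p (pdivp p x) (Ip_point p (N + 1) k)))"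
proof (cases "haar_exists p")
  case True
  then obtain c where "AE x in haar p.
      \<phi> (pmulp p x) = (\<Sum>k<p ^ (N + 1). c k * \<phi> (psub p x (Ip_point p (N + 1) k)))"
    using dilate_scaling_eq_lincomb_translates[OF p True MRA sf supp] by blast
  from AE_haar_pulls_back_balls[OF p pulls_back_balls_pdivp[OF p] this] AE_space show ?thesis
    by (intro exI[of _ c], eventually_elim) (simp add: pmulp_pdivp[OF p] space_haar)
qed (simp add: AE_haar_trivial)

lemma refinable_of_refinement_equation:
  assumes p: "p \<ge> 2"
    and eq: "AE x in haar p. \<phi> x = (\<Sum>k<p ^ n. c k * \<phi> (psub p (pdivp p x) (Ip_point p n k)))"
  shows "refinable p \<phi>"
proof -
  define \<alpha> where "\<alpha> a = (\<Sum>k | k \<in> {..<p ^ n} \<and> Ip_point p n k = a. c k)" for a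
  have "\<forall>\<^sub>F F in finite_subsets_at_top (Ip p).
      l2dist p \<phi> (\<lambda>x. \<Sum>a\<in>F. \<alpha> a * \<phi> (psub p (pdivp p x) a)) = 0"
    unfolding eventually_finite_subsets_at_top
  proof (intro exI[of _ "Ip_point p n ` {..<p ^ n}"] conjI allI impI)
    show "Ip_point p n ` {..<p ^ n} \<subseteq> Ip p" using Ip_Int_pball0[OF p] by blast
    fix F assume F: "finite F \<and> Ip_point p n ` {..<p ^ n} \<subseteq> F \<and> F \<subseteq> Ip p"
    have "(\<Sum>a\<in>F. \<alpha> a * \<phi> (psub p (pdivp p x) a))
        = (\<Sum>k<p ^ n. c k * \<phi> (psub p (pdivp p x) (Ip_point p n k)))" for x
    proof -
      have "(\<Sum>a\<in>F. \<alpha> a * \<phi> (psub p (pdivp p x) a))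
          = (\<Sum>a\<in>F. \<Sum>k | k \<in> {..<p ^ n} \<and> Ip_point p n k = a. c k * \<phi> (psub p (pdivp p x) (Ip_point p n k)))"
        unfolding \<alpha>_def sum_distrib_right by (intro sum.cong) auto
      also have "\<dots> = (\<Sum>k<p ^ n. c k * \<phi> (psub p (pdivp p x) (Ip_point p n k)))"
        using F by (intro sum.group) auto
      finally show ?thesis .
    qed
    then show "l2dist p \<phi> (\<lambda>x. \<Sum>a\<in>F. \<alpha> a * \<phi> (psub p (pdivp p x) a)) = 0"
      unfolding l2dist_def using eq by (subst integral_eq_zero_AE) (auto elim!: eventually_mono)
  qed simp
  then show ?thesis unfolding refinable_def by (blast intro: tendsto_eventually)
qed

theorem corollary2:
  fixes p N :: nat and V :: "int \<Rightarrow> ((nat \<Rightarrow> rat) \<Rightarrow> complex) set"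
    and \<phi> :: "(nat \<Rightarrow> rat) \<Rightarrow> complex"
  assumes "prime p"
    and "MRA p V"
    and "scaling_function p V \<phi>"
    and "AE x in haar p. x \<notin> pball p (int N) pzero \<longrightarrow> \<phi> x = 0"
  shows "refinable p \<phi> \<and>
    (\<exists>h :: nat \<Rightarrow> complex. AE x in haar p.
       \<phi> x = (\<Sum>k<p ^ (N + 1). h k *
          \<phi> (psub p (pdivp p x) (padic_of_rat p (of_nat k / of_nat (p ^ (N + 1)))))))"
proof -
  have p: "p \<ge> 2" using assms(1) prime_ge_2_nat by blast
  obtain h where h: "AE x in haar p.
      \<phi> x = (\<Sum>k<p ^ (N + 1). h k * \<phi> (psub p (pdivp p x) (Ip_point p (N + 1) k)))"
    using scaling_function_refinement_equation[OF p assms(2-4)] by blast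
  then have "refinable p \<phi>" by (rule refinable_of_refinement_equation[OF p])
  with h show ?thesis unfolding Ip_point_def by blast
qed

end
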